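(* Let $\Omega\subset\mathbb{R}^N$, $N\ge2$, be a Lipschitz domain with $0\in\partial\Omega$ such that $\partial\Omega$ is of class $C^2$ near $0$. Then there exist constants $c=c(\Omega)>0$ and $r_0=r_0(\Omega)>0$ such that for all $r\in(0,r_0)$ and all $u\in H^1_0(\Omega\cap B_r(0))$, $$\int_{\Omega\cap B_r(0)}|\nabla u|^2dx-\frac{N^2}{4}\int_{\Omega\cap B_r(0)}\frac{|u|^2}{|x|^2}dx\ \ge\ c\int_{\Omega\cap B_r(0)}\frac{|u|^2}{|x|^2|\log|x||^2}dx.$$ *)

theory Defs
  imports "HOL-Analysis.Analysis"
begin

definition hyp_proj :: "real^'n \<Rightarrow> real^'n \<Rightarrow> real^'n" where
  "hyp_proj nu x = x - (x \<bullet> nu) *\<^sub>R nu"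

text \<open>Lipschitz domain: open, connected, and near every boundary point it is (after a rotation)
  the region below the graph of a Lipschitz function over a hyperplane.\<close>
definition lipschitz_domain :: "(real^'n) set \<Rightarrow> bool" where
  "lipschitz_domain \<Omega> \<longleftrightarrow> open \<Omega> \<and> connected \<Omega> \<and> \<Omega> \<noteq> {} \<and>
     (\<forall>p \<in> frontier \<Omega>. \<exists>\<rho> > 0. \<exists>nu h L. norm nu = 1 \<and> L-lipschitz_on UNIV h \<and>
        \<Omega> \<inter> ball p \<rho> = {x \<in> ball p \<rho>. x \<bullet> nu < h (hyp_proj nu x)})"

definition C2_fun :: "(real^'n \<Rightarrow> real) \<Rightarrow> bool" where
  "C2_fun h \<longleftrightarrow> (\<exists>g H. (\<forall>y. (h has_derivative (\<lambda>v. g y \<bullet> v)) (at y)) \<and>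
       (\<forall>y. (g has_derivative H y) (at y)) \<and> (\<forall>v. continuous_on UNIV (\<lambda>y. H y v)))"

definition C2_boundary_near :: "(real^'n) set \<Rightarrow> real^'n \<Rightarrow> bool" where
  "C2_boundary_near \<Omega> p \<longleftrightarrow> (\<exists>\<rho> > 0. \<exists>nu h. norm nu = 1 \<and> C2_fun h \<and>
        \<Omega> \<inter> ball p \<rho> = {x \<in> ball p \<rho>. x \<bullet> nu < h (hyp_proj nu x)})"

definition test_fun :: "(real^'n) set \<Rightarrow> (real^'n \<Rightarrow> real) \<Rightarrow> (real^'n \<Rightarrow> real^'n) \<Rightarrow> bool" where
  "test_fun U \<phi> g \<longleftrightarrow> (\<forall>x. (\<phi> has_derivative (\<lambda>v. g x \<bullet> v)) (at x)) \<and> continuous_on UNIV g \<and>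
     compact (closure {x. \<phi> x \<noteq> 0}) \<and> closure {x. \<phi> x \<noteq> 0} \<subseteq> U"

text \<open>u belongs to H^1_0(U) with (weak) gradient G: (u, G) is an L^2-limit of
  (\<phi>_k, grad \<phi>_k) for compactly supported C^1 functions \<phi>_k in U, i.e. u lies in the
  closure of the test functions w.r.t. the H^1 norm.\<close>
definition H10 :: "(real^'n) set \<Rightarrow> (real^'n \<Rightarrow> real) \<Rightarrow> (real^'n \<Rightarrow> real^'n) \<Rightarrow> bool" where
  "H10 U u G \<longleftrightarrow> u \<in> borel_measurable lborel \<and> G \<in> borel_measurable lborel \<and>
     (\<exists>\<phi> g. (\<forall>k. test_fun U (\<phi> k) (g k)) \<and>
        ((\<lambda>k. \<integral>\<^sup>+x. ennreal ((\<phi> k x - u x)\<^sup>2) \<partial>lborel) \<longlonglongrightarrow> 0) \<and>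
        ((\<lambda>k. \<integral>\<^sup>+x. ennreal ((norm (g k x - G x))\<^sup>2) \<partial>lborel) \<longlonglongrightarrow> 0))"

end

theory Submission
  imports Defs
begin

(* If F is a C^1 vector field on an open set U and
   W <= div F - |F|^2 on U, then expanding 0 <= |grad phi + phi F|^2 and integrating
   div (phi^2 F) = 0 gives  int W phi^2 <= int |grad phi|^2  for every test function
   phi on U; by density and Fatou's lemma this passes to all of H^1_0(U).

   Write the boundary near 0 as the graph x.nu = h(Px), with
   h(0) = 0, and let d(x) = h(Px) - x.nu, which is positive in Omega.  With
   L = -ln|x|, beta = N/2 + 1/(2L) and delta = d (1 - kap (d + A |x|)) we take
       F = - grad delta / delta + beta x / |x|^2 .
   A direct computation gives
       div F - |F|^2 = (N^2/4 + 1/(4 L^2)) / |x|^2 + (nonnegative error) / delta,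
   the error being controlled by second-order Taylor expansion of h at 0, provided
   kap and A are large and |x| is small.  This yields the constant c = 1/4. *)

section \<open>Integrals of compactly supported functions\<close>

lemma integral_lborel_translate:
  fixes f :: "'a::euclidean_space \<Rightarrow> real"
  assumes "integrable lborel f"
  shows "integrable lborel (\<lambda>x. f (c + x))"
    and "integral\<^sup>L lborel (\<lambda>x. f (c + x)) = integral\<^sup>L lborel f"
proof -
  have m: "f \<in> borel_measurable borel" using assms by auto
  have "integrable (distr lborel borel ((+) c)) f" using assms by (simp add: lborel_distr_plus)
  then show "integrable lborel (\<lambda>x. f (c + x))"
    by (subst (asm) integrable_distr_eq) (auto simp: m)
  have "integral\<^sup>L lborel f = integral\<^sup>L (distr lborel borel ((+) c)) f"
    by (simp add: lborel_distr_plus)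
  also have "\<dots> = integral\<^sup>L lborel (\<lambda>x. f (c + x))"
    by (rule integral_distr) (auto simp: m)
  finally show "integral\<^sup>L lborel (\<lambda>x. f (c + x)) = integral\<^sup>L lborel f" by simp
qed

lemma continuous_compact_support_integrable:
  fixes f :: "'a::euclidean_space \<Rightarrow> real"
  assumes "continuous_on UNIV f" "compact K" "\<And>x. x \<notin> K \<Longrightarrow> f x = 0"
  shows "integrable lborel f"
proof -
  have "integrable lborel (\<lambda>x. indicator K x *\<^sub>R f x)"
    by (rule borel_integrable_compact[OF assms(2)]) (rule continuous_on_subset[OF assms(1)], auto)
  also have "(\<lambda>x. indicator K x *\<^sub>R f x) = f"
    using assms(3) by (auto simp: indicator_def fun_eq_iff)
  finally show ?thesis .
qed

text \<open>A bound on a directional derivative bounds the increments along that direction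
  (mean value theorem on lines).\<close>
lemma directional_increment_bound:
  fixes f f' :: "'a::real_normed_vector \<Rightarrow> real"
  assumes der: "\<And>x. ((\<lambda>s. f (x + s *\<^sub>R e)) has_real_derivative f' x) (at 0)"
    and B: "\<And>x. \<bar>f' x\<bar> \<le> B"
  shows "\<bar>f (x + t *\<^sub>R e) - f x\<bar> \<le> B * \<bar>t\<bar>"
proof -
  have der_line: "((\<lambda>s. f (x + s *\<^sub>R e)) has_real_derivative f' (x + t *\<^sub>R e)) (at t)" for t
  proof -
    have "((\<lambda>s. f ((x + t *\<^sub>R e) + (s - t) *\<^sub>R e)) has_real_derivative f' (x + t *\<^sub>R e)) (at (0 + t))"
      using DERIV_shift[where f="\<lambda>s. f ((x + t *\<^sub>R e) + (s - t) *\<^sub>R e)" and z=t and x=0]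
        der[of "x + t *\<^sub>R e"] by simp
    moreover have "(\<lambda>s. f ((x + t *\<^sub>R e) + (s - t) *\<^sub>R e)) = (\<lambda>s. f (x + s *\<^sub>R e))"
      by (auto simp: algebra_simps)
    ultimately show ?thesis by simp
  qed
  consider "t = 0" | "0 < t" | "t < 0" by linarith
  then show ?thesis
  proof cases
    case 1 then show ?thesis by simp
  next
    case 2
    obtain z where "f (x + t *\<^sub>R e) - f (x + 0 *\<^sub>R e) = (t - 0) * f' (x + z *\<^sub>R e)"
      using MVT2[OF 2, of "\<lambda>s. f (x + s *\<^sub>R e)" "\<lambda>s. f' (x + s *\<^sub>R e)"] der_line by blast
    then show ?thesis using B[of "x + z *\<^sub>R e"] 2 by (simp add: abs_mult mult.commute mult_left_mono)
  next
    case 3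
    obtain z where "f (x + 0 *\<^sub>R e) - f (x + t *\<^sub>R e) = (0 - t) * f' (x + z *\<^sub>R e)"
      using MVT2[OF 3, of "\<lambda>s. f (x + s *\<^sub>R e)" "\<lambda>s. f' (x + s *\<^sub>R e)"] der_line by blast
    then have "\<bar>f (x + t *\<^sub>R e) - f x\<bar> = \<bar>t\<bar> * \<bar>f' (x + z *\<^sub>R e)\<bar>"
      using 3 by (simp add: abs_mult abs_minus_commute)
    then show ?thesis using B[of "x + z *\<^sub>R e"] 3 by (simp add: mult.commute mult_left_mono)
  qed
qed

text \<open>The integral of a continuous directional derivative of a compactly supported function
  vanishes: it is the dominated limit of integrals of difference quotients, each of which is
  zero by translation invariance.\<close>
lemma directional_derivative_integral_zero:
  fixes f f' :: "'a::euclidean_space \<Rightarrow> real" and e :: 'a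
  assumes der: "\<And>x. ((\<lambda>s. f (x + s *\<^sub>R e)) has_real_derivative f' x) (at 0)"
    and cf: "continuous_on UNIV f" and cf': "continuous_on UNIV f'"
    and K: "compact K" and f0: "\<And>x. x \<notin> K \<Longrightarrow> f x = 0" and f'0: "\<And>x. x \<notin> K \<Longrightarrow> f' x = 0"
  shows "integrable lborel f'" "integral\<^sup>L lborel f' = 0"
proof -
  obtain B where B: "\<And>x. \<bar>f' x\<bar> \<le> B"
  proof -
    obtain B0 where "\<And>x. x \<in> K \<Longrightarrow> norm (f' x) \<le> B0" "B0 \<ge> 0"
      using continuous_on_compact_bound[OF K continuous_on_subset[OF cf']] by blast
    then have "\<bar>f' x\<bar> \<le> B0" for x by (cases "x \<in> K") (auto simp: f'0)
    then show ?thesis using that by blast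
  qed
  obtain R where R: "\<And>x. x \<in> K \<Longrightarrow> norm x \<le> R"
    using compact_imp_bounded[OF K] unfolding bounded_pos by blast
  define t where "t n = 1 / (real n + 1)" for n
  have tpos: "t n > 0" and t1: "t n \<le> 1" for n by (simp_all add: t_def)
  define q where "q n x = (f (x + t n *\<^sub>R e) - f x) / t n" for n x
  have intf: "integrable lborel f" by (rule continuous_compact_support_integrable[OF cf K f0])
  have mf': "f' \<in> borel_measurable lborel" using cf' by (simp add: borel_measurable_continuous_onI)
  have intq: "integrable lborel (q n)" and intq0: "integral\<^sup>L lborel (q n) = 0" for n
    unfolding q_def using integral_lborel_translate[OF intf, of "t n *\<^sub>R e"] intf
    by (auto simp: add.commute integral_diff)
  have lim: "(\<lambda>n. q n x) \<longlonglongrightarrow> f' x" for x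
  proof -
    have "t \<longlonglongrightarrow> 0" unfolding t_def
      using LIMSEQ_inverse_real_of_nat by (simp add: inverse_eq_divide add.commute)
    moreover have "\<forall>n. t n \<noteq> 0" using tpos by (metis less_irrefl)
    moreover have "((\<lambda>s. (f (x + s *\<^sub>R e) - f x) / s) \<longlongrightarrow> f' x) (at 0)"
      using der[of x] unfolding has_field_derivative_iff by simp
    ultimately show ?thesis unfolding q_def using iffD2[OF LIMSEQ_SEQ_conv] by blast
  qed
  have dominated: "norm (q n x) \<le> B * indicator (cball (0::'a) (R + norm e)) x" for n x
  proof (cases "x \<in> cball 0 (R + norm e)")
    case True
    have "\<bar>f (x + t n *\<^sub>R e) - f x\<bar> / t n \<le> B"
      using directional_increment_bound[OF der B, of x "t n"] tpos[of n] by (simp add: divide_le_eq)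
    then show ?thesis using True tpos[of n] by (simp add: q_def abs_div)
  next
    case False
    then have nx: "norm x > R + norm e" by simp
    have "norm (t n *\<^sub>R e) \<le> norm e" using t1 tpos[of n] by (simp add: mult_left_le_one_le)
    then have "norm (x + t n *\<^sub>R e) > R"
      using nx norm_triangle_ineq[of "x + t n *\<^sub>R e" "- (t n *\<^sub>R e)"] by simp
    then have "x \<notin> K" "x + t n *\<^sub>R e \<notin> K" using nx R[of x] R[of "x + t n *\<^sub>R e"] norm_ge_zero[of e]
      by force+
    then show ?thesis using f0 False by (simp add: q_def)
  qed
  have intw: "integrable lborel (\<lambda>x. B * indicator (cball (0::'a) (R + norm e)) x)"
    by (intro integrable_mult_right integrable_real_indicator)
       (use emeasure_compact_finite[of "cball (0::'a) (R + norm e)"] in auto)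
  have mq: "q n \<in> borel_measurable lborel" for n using intq[of n] by auto
  have "(\<lambda>n. integral\<^sup>L lborel (q n)) \<longlonglongrightarrow> integral\<^sup>L lborel f'"
    by (rule integral_dominated_convergence[where s=q, OF mf' _ intw]) (use lim dominated mq in auto)
  then show "integral\<^sup>L lborel f' = 0" using intq0 by (simp add: LIMSEQ_const_iff)
  show "integrable lborel f'"
    by (rule integrable_dominated_convergence[where s=q, OF mf' _ intw]) (use lim dominated mq in auto)
qed

text \<open>Trace of a linear map on a Euclidean space, in an orthonormal basis; the divergence of
  a vector field is the trace of its derivative.\<close>
definition trace_map :: "('a::euclidean_space \<Rightarrow> 'a) \<Rightarrow> real" where
  "trace_map f = (\<Sum>i\<in>Basis. f i \<bullet> i)"

lemma trace_map_add: "trace_map (\<lambda>v. f v + g v) = trace_map f + trace_map g"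
  by (simp add: trace_map_def inner_add_left sum.distrib)
lemma trace_map_diff: "trace_map (\<lambda>v. f v - g v) = trace_map f - trace_map g"
  by (simp add: trace_map_def inner_diff_left sum_subtractf)
lemma trace_map_minus: "trace_map (\<lambda>v. - f v) = - trace_map f"
  by (simp add: trace_map_def sum_negf)
lemma trace_map_scale: "trace_map (\<lambda>v. c *\<^sub>R f v) = c * trace_map f"
  by (simp add: trace_map_def sum_distrib_left)
lemma trace_map_rank1: "trace_map (\<lambda>v. (a \<bullet> v) *\<^sub>R w) = a \<bullet> w"
  unfolding trace_map_def inner_scaleR_left by (simp only: euclidean_inner[of a w])
lemma trace_map_rank1_div: "trace_map (\<lambda>v. ((a \<bullet> v) / c) *\<^sub>R w) = (a \<bullet> w) / c"
  using trace_map_rank1[of "a /\<^sub>R c" w] by (simp add: divide_inverse mult.commute)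
lemma trace_map_id: "trace_map (\<lambda>v. v :: 'a::euclidean_space) = DIM('a)"
  by (simp add: trace_map_def)

lemma divergence_integral_zero:
  fixes V :: "'a::euclidean_space \<Rightarrow> 'a"
  assumes Vd: "\<And>x. (V has_derivative V' x) (at x)"
    and V'c: "\<And>v. continuous_on UNIV (\<lambda>x. V' x v)"
    and K: "compact K" and V0: "\<And>x. x \<notin> K \<Longrightarrow> V x = 0" and V'0: "\<And>x v. x \<notin> K \<Longrightarrow> V' x v = 0"
  shows "integrable lborel (\<lambda>x. trace_map (V' x))" "integral\<^sup>L lborel (\<lambda>x. trace_map (V' x)) = 0"
proof -
  have Vc: "continuous_on UNIV V"
    using Vd by (meson continuous_at_imp_continuous_on has_derivative_continuous)
  have component: "integrable lborel (\<lambda>x. V' x i \<bullet> i) \<and> integral\<^sup>L lborel (\<lambda>x. V' x i \<bullet> i) = 0" for i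
  proof -
    have der: "((\<lambda>s. V (x + s *\<^sub>R i) \<bullet> i) has_real_derivative V' x i \<bullet> i) (at 0)" for x
    proof -
      have "((\<lambda>s. x + s *\<^sub>R i) has_derivative (\<lambda>s. s *\<^sub>R i)) (at (0::real))"
        by (auto intro!: derivative_eq_intros)
      from has_derivative_compose[OF this, of V "V' x"] Vd[of x]
      have "((\<lambda>s. V (x + s *\<^sub>R i) \<bullet> i) has_derivative (\<lambda>s. V' x (s *\<^sub>R i) \<bullet> i)) (at 0)"
        by (auto intro!: derivative_eq_intros)
      moreover have "linear (V' x)" using Vd[of x] has_derivative_linear by blast
      ultimately show ?thesis
        by (simp add: has_field_derivative_def linear_scale mult_commute_abs)
    qed
    have "continuous_on UNIV (\<lambda>x. V x \<bullet> i)" "continuous_on UNIV (\<lambda>x. V' x i \<bullet> i)"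
      by (intro continuous_intros Vc V'c)+
    then show ?thesis
      using directional_derivative_integral_zero[of "\<lambda>x. V x \<bullet> i" i "\<lambda>x. V' x i \<bullet> i" K, OF der]
        V0 V'0 K by auto
  qed
  then show "integrable lborel (\<lambda>x. trace_map (V' x))" "integral\<^sup>L lborel (\<lambda>x. trace_map (V' x)) = 0"
    by (auto simp: trace_map_def integral_sum)
qed


section \<open>From test functions to \<open>H\<^sup>1\<^sub>0\<close>\<close>

lemma test_fun_continuous:
  assumes "test_fun U \<phi> g"
  shows "continuous_on UNIV \<phi>" "continuous_on UNIV g"
proof -
  have "\<And>x. isCont \<phi> x" using assms unfolding test_fun_def by (meson has_derivative_continuous)
  then show "continuous_on UNIV \<phi>" by (simp add: continuous_at_imp_continuous_on)
  show "continuous_on UNIV g" using assms unfolding test_fun_def by blast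
qed

lemma test_fun_gradient_off_support:
  assumes tf: "test_fun U \<phi> g" and x: "x \<notin> closure {x. \<phi> x \<noteq> 0}"
  shows "g x = 0"
proof -
  define K where "K = closure {x. \<phi> x \<noteq> 0}"
  have oK: "open (- K)" unfolding K_def by (simp add: open_Compl)
  have xK: "x \<in> - K" using x unfolding K_def by simp
  have "{x. \<phi> x \<noteq> 0} \<subseteq> K" unfolding K_def by (rule closure_subset)
  then have \<phi>0: "\<phi> y = 0" if "y \<in> - K" for y using that by blast
  have \<phi>d: "(\<phi> has_derivative (\<lambda>v. g x \<bullet> v)) (at x)" using tf unfolding test_fun_def by blast
  have "((\<lambda>y. 0::real) has_derivative (\<lambda>v. g x \<bullet> v)) (at x)"
    by (rule has_derivative_transform_within_open[OF \<phi>d oK xK]) (simp add: \<phi>0)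
  then have "(\<lambda>v. g x \<bullet> v) = (\<lambda>v. 0)"
    using has_derivative_unique[OF _ has_derivative_const] by blast
  then have "g x \<bullet> g x = 0" using fun_cong[of "\<lambda>v. g x \<bullet> v" "\<lambda>v. 0" "g x"] by simp
  then show ?thesis by simp
qed

lemma L2_convergent_AE_subseq:
  fixes f :: "nat \<Rightarrow> 'a::euclidean_space \<Rightarrow> real"
  assumes m: "\<And>k. f k \<in> borel_measurable lborel" "u \<in> borel_measurable lborel"
    and lim: "(\<lambda>k. \<integral>\<^sup>+x. ennreal ((f k x - u x)\<^sup>2) \<partial>lborel) \<longlonglongrightarrow> 0"
  shows "\<exists>s. strict_mono s \<and> (AE x in lborel. (\<lambda>n. f (s n) x) \<longlonglongrightarrow> u x)"
proof -
  obtain N where N: "\<And>k. k \<ge> N \<Longrightarrow> (\<integral>\<^sup>+x. ennreal ((f k x - u x)\<^sup>2) \<partial>lborel) < 1"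
    using order_tendstoD(2)[OF lim, of 1] by (auto simp: eventually_sequentially)
  define v where "v n x = (f (n + N) x - u x)\<^sup>2" for n x
  have mv: "v n \<in> borel_measurable lborel" for n unfolding v_def using m by measurable
  have fin: "(\<integral>\<^sup>+x. ennreal (v n x) \<partial>lborel) < \<infinity>" for n
  proof -
    have "(\<integral>\<^sup>+x. ennreal (v n x) \<partial>lborel) < 1" using N[of "n + N"] unfolding v_def by simp
    then show ?thesis using ennreal_one_less_top order.strict_trans by (metis infinity_ennreal_def)
  qed
  have iv: "integrable lborel (v n)" for n
    by (rule integrableI_nonneg[OF mv _ fin]) (auto simp: v_def)
  have eq: "(\<integral>x. norm (v n x) \<partial>lborel) = enn2real (\<integral>\<^sup>+x. ennreal (v n x) \<partial>lborel)" for n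
    using mv[of n] by (subst integral_eq_nn_integral) (auto simp: v_def[abs_def])
  have "(\<lambda>n. \<integral>\<^sup>+x. ennreal (v n x) \<partial>lborel) \<longlonglongrightarrow> ennreal 0"
    unfolding v_def using LIMSEQ_ignore_initial_segment[OF lim, of N] by simp
  then have "(\<lambda>n. (\<integral>x. norm (v n x) \<partial>lborel)) \<longlonglongrightarrow> 0"
    unfolding eq by (rule tendsto_enn2real) simp
  from tendsto_L1_AE_subseq[OF iv this] obtain r where r: "strict_mono r"
    and ae: "AE x in lborel. (\<lambda>n. v (r n) x) \<longlonglongrightarrow> 0" by blast
  have "AE x in lborel. (\<lambda>n. f (r n + N) x) \<longlonglongrightarrow> u x"
    using ae
  proof eventually_elim
    fix x assume "(\<lambda>n. v (r n) x) \<longlonglongrightarrow> 0"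
    then have "(\<lambda>n. sqrt (v (r n) x)) \<longlonglongrightarrow> sqrt 0" by (intro tendsto_real_sqrt)
    then have "(\<lambda>n. f (r n + N) x - u x) \<longlonglongrightarrow> 0" by (simp add: v_def tendsto_rabs_zero_iff)
    then show "(\<lambda>n. f (r n + N) x) \<longlonglongrightarrow> u x" by (simp add: LIM_zero_iff)
  qed
  moreover have "strict_mono (\<lambda>n. r n + N)" using r by (simp add: strict_mono_def)
  ultimately show ?thesis by blast
qed

lemma weighted_square_fatou:
  fixes w :: "'a::euclidean_space \<Rightarrow> real"
  assumes U: "U \<in> sets lborel" and wm: "w \<in> borel_measurable lborel"
    and m\<phi>: "\<And>n. \<phi> n \<in> borel_measurable lborel"
    and ae: "AE x in lborel. (\<lambda>n. \<phi> n x) \<longlonglongrightarrow> u x"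
  shows "(\<integral>\<^sup>+x\<in>U. ennreal (w x * (u x)\<^sup>2) \<partial>lborel)
           \<le> liminf (\<lambda>n. \<integral>\<^sup>+x\<in>U. ennreal (w x * (\<phi> n x)\<^sup>2) \<partial>lborel)"
proof -
  have "(\<integral>\<^sup>+x\<in>U. ennreal (w x * (u x)\<^sup>2) \<partial>lborel)
      = (\<integral>\<^sup>+x. liminf (\<lambda>n. ennreal (w x * (\<phi> n x)\<^sup>2) * indicator U x) \<partial>lborel)"
  proof (rule nn_integral_cong_AE)
    show "AE x in lborel. ennreal (w x * (u x)\<^sup>2) * indicator U x =
        liminf (\<lambda>n. ennreal (w x * (\<phi> n x)\<^sup>2) * indicator U x)"
      using ae
    proof eventually_elim
      fix x assume "(\<lambda>n. \<phi> n x) \<longlonglongrightarrow> u x"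
      then have "(\<lambda>n. ennreal (w x * (\<phi> n x)\<^sup>2) * indicator U x)
          \<longlonglongrightarrow> ennreal (w x * (u x)\<^sup>2) * indicator U x"
        by (intro tendsto_intros) (auto simp: indicator_def)
      then show "ennreal (w x * (u x)\<^sup>2) * indicator U x =
          liminf (\<lambda>n. ennreal (w x * (\<phi> n x)\<^sup>2) * indicator U x)"
        by (simp add: lim_imp_Liminf)
    qed
  qed
  also have "\<dots> \<le> liminf (\<lambda>n. \<integral>\<^sup>+x. ennreal (w x * (\<phi> n x)\<^sup>2) * indicator U x \<partial>lborel)"
    by (rule nn_integral_liminf) (use m\<phi> wm U in measurable)
  finally show ?thesis .
qed

lemma norm_square_split:
  fixes a b :: "'a::real_normed_vector"
  assumes "e > 0"
  shows "(norm a)\<^sup>2 \<le> (1 + e) * (norm b)\<^sup>2 + (1 + 1/e) * (norm (a - b))\<^sup>2"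
proof -
  have "norm a \<le> norm b + norm (a - b)" using norm_triangle_ineq[of b "a - b"] by simp
  then have "(norm a)\<^sup>2 \<le> (norm b + norm (a - b))\<^sup>2" by (simp add: power_mono)
  also have "\<dots> = (1 + e) * (norm b)\<^sup>2 + (1 + 1/e) * (norm (a - b))\<^sup>2
                  - (e * norm b - norm (a - b))\<^sup>2 / e"
    using assms by (simp add: power2_eq_square field_simps)
  also have "\<dots> \<le> (1 + e) * (norm b)\<^sup>2 + (1 + 1/e) * (norm (a - b))\<^sup>2" using assms by simp
  finally show ?thesis .
qed

text \<open>A weighted inequality \<open>\<integral>\<^sub>U w \<phi>\<^sup>2 \<le> \<integral>\<^sub>U |\<nabla>\<phi>|\<^sup>2\<close> valid for all test functions on U
  extends to all of \<open>H\<^sup>1\<^sub>0(U)\<close>: along an a.e. convergent subsequence of the approximating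
  test functions use Fatou on the left and the \<open>L\<^sup>2\<close> convergence of gradients, up to a factor
  \<open>1 + e\<close>, on the right.\<close>
lemma weighted_ineq_extends_to_H10:
  fixes U :: "(real^'n) set" and w :: "real^'n \<Rightarrow> real"
  assumes U: "open U" and wm: "w \<in> borel_measurable lborel" and w0: "\<And>x. w x \<ge> 0"
    and ineq: "\<And>\<phi> g. test_fun U \<phi> g \<Longrightarrow>
       (\<integral>\<^sup>+x\<in>U. ennreal (w x * (\<phi> x)\<^sup>2) \<partial>lborel) \<le> (\<integral>\<^sup>+x\<in>U. ennreal ((norm (g x))\<^sup>2) \<partial>lborel)"
    and H: "H10 U u G"
  shows "(\<integral>\<^sup>+x\<in>U. ennreal (w x * (u x)\<^sup>2) \<partial>lborel) \<le> (\<integral>\<^sup>+x\<in>U. ennreal ((norm (G x))\<^sup>2) \<partial>lborel)"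
proof -
  from H obtain \<phi> g where mu: "u \<in> borel_measurable lborel" and mG: "G \<in> borel_measurable lborel"
    and tf: "\<And>k. test_fun U (\<phi> k) (g k)"
    and L1: "(\<lambda>k. \<integral>\<^sup>+x. ennreal ((\<phi> k x - u x)\<^sup>2) \<partial>lborel) \<longlonglongrightarrow> 0"
    and L2: "(\<lambda>k. \<integral>\<^sup>+x. ennreal ((norm (g k x - G x))\<^sup>2) \<partial>lborel) \<longlonglongrightarrow> 0"
    unfolding H10_def by blast
  have m\<phi>: "\<phi> k \<in> borel_measurable lborel" and mg: "g k \<in> borel_measurable lborel" for k
    using test_fun_continuous[OF tf[of k]] by (simp_all add: borel_measurable_continuous_onI)
  have mU: "U \<in> sets lborel" using U by simp
  obtain s where s: "strict_mono s" and ae: "AE x in lborel. (\<lambda>n. \<phi> (s n) x) \<longlonglongrightarrow> u x"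
    using L2_convergent_AE_subseq[OF m\<phi> mu L1] by blast
  define X where "X = (\<integral>\<^sup>+x\<in>U. ennreal ((norm (G x))\<^sup>2) \<partial>lborel)"
  define R where "R = (\<integral>\<^sup>+x\<in>U. ennreal (w x * (u x)\<^sup>2) \<partial>lborel)"
  define Y where "Y n = (\<integral>\<^sup>+x\<in>U. ennreal (w x * (\<phi> (s n) x)\<^sup>2) \<partial>lborel)" for n
  define B where "B n = (\<integral>\<^sup>+x. ennreal ((norm (g (s n) x - G x))\<^sup>2) \<partial>lborel)" for n
  have fatou: "R \<le> liminf Y"
    unfolding R_def Y_def by (rule weighted_square_fatou[OF mU wm m\<phi> ae])
  have YB: "Y n \<le> ennreal (1 + e) * X + ennreal (1 + 1/e) * B n" if e: "e > 0" for e n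
  proof -
    have "Y n \<le> (\<integral>\<^sup>+x\<in>U. ennreal ((norm (g (s n) x))\<^sup>2) \<partial>lborel)"
      unfolding Y_def by (rule ineq[OF tf])
    also have "\<dots> \<le> (\<integral>\<^sup>+x. ennreal (1 + e) * (ennreal ((norm (G x))\<^sup>2) * indicator U x)
                   + ennreal (1 + 1/e) * ennreal ((norm (g (s n) x - G x))\<^sup>2) \<partial>lborel)"
    proof (rule nn_integral_mono)
      fix x
      have "ennreal ((norm (g (s n) x))\<^sup>2) \<le> ennreal (1 + e) * ennreal ((norm (G x))\<^sup>2)
              + ennreal (1 + 1/e) * ennreal ((norm (g (s n) x - G x))\<^sup>2)"
        using norm_square_split[OF e, of "g (s n) x" "G x"] e
        by (simp add: ennreal_mult[symmetric] ennreal_plus[symmetric] del: ennreal_plus)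
      then show "ennreal ((norm (g (s n) x))\<^sup>2) * indicator U x
          \<le> ennreal (1 + e) * (ennreal ((norm (G x))\<^sup>2) * indicator U x)
             + ennreal (1 + 1/e) * ennreal ((norm (g (s n) x - G x))\<^sup>2)"
        by (cases "x \<in> U") auto
    qed
    also have "\<dots> = ennreal (1 + e) * X + ennreal (1 + 1/e) * B n"
      unfolding X_def B_def
      by (subst nn_integral_add) (use mG mg mU in \<open>auto simp: nn_integral_cmult\<close>)
    finally show ?thesis .
  qed
  have R_le: "R \<le> ennreal (1 + e) * X" if e: "e > 0" for e
  proof -
    have "B \<longlonglongrightarrow> 0" unfolding B_def using LIMSEQ_subseq_LIMSEQ[OF L2 s] by (simp add: o_def)
    then have "(\<lambda>n. ennreal (1 + e) * X + ennreal (1 + 1/e) * B n)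
        \<longlonglongrightarrow> ennreal (1 + e) * X + ennreal (1 + 1/e) * 0"
      by (intro tendsto_intros) auto
    then have "liminf (\<lambda>n. ennreal (1 + e) * X + ennreal (1 + 1/e) * B n) = ennreal (1 + e) * X"
      by (simp add: lim_imp_Liminf)
    moreover have "liminf Y \<le> liminf (\<lambda>n. ennreal (1 + e) * X + ennreal (1 + 1/e) * B n)"
      by (rule Liminf_mono) (use YB[OF e] in auto)
    ultimately show ?thesis using fatou by simp
  qed
  have "(\<lambda>n. ennreal (1 + 1 / (real n + 1)) * X) \<longlonglongrightarrow> ennreal (1 + 0) * X"
  proof (rule tendsto_mult_ennreal)
    have "(\<lambda>n. 1 / (real n + 1)) \<longlonglongrightarrow> 0"
      using LIMSEQ_inverse_real_of_nat by (simp add: inverse_eq_divide add.commute)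
    then show "(\<lambda>n. ennreal (1 + 1 / (real n + 1))) \<longlonglongrightarrow> ennreal (1 + 0)"
      by (intro tendsto_intros)
  qed auto
  then have "R \<le> ennreal (1 + 0) * X"
    by (rule LIMSEQ_le_const) (use R_le in auto)
  then show ?thesis unfolding R_def X_def by simp
qed


section \<open>The vector field method\<close>

lemma cutoff_field:
  fixes U :: "(real^'n) set" and F :: "real^'n \<Rightarrow> real^'n"
  assumes U: "open U" and Fd: "\<And>x. x \<in> U \<Longrightarrow> (F has_derivative F' x) (at x)"
    and F'c: "\<And>v. continuous_on U (\<lambda>x. F' x v)" and tf: "test_fun U \<phi> g"
  defines "V \<equiv> \<lambda>x. if x \<in> U then (\<phi> x)\<^sup>2 *\<^sub>R F x else 0"
    and "V' \<equiv> \<lambda>x v. if x \<in> U then (2 * \<phi> x * (g x \<bullet> v)) *\<^sub>R F x + (\<phi> x)\<^sup>2 *\<^sub>R F' x v else 0"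
    and "K \<equiv> closure {x. \<phi> x \<noteq> 0}"
  shows "(V has_derivative V' x) (at x)" and "continuous_on UNIV (\<lambda>x. V' x v)"
    and "x \<notin> K \<Longrightarrow> V x = 0" and "x \<notin> K \<Longrightarrow> V' x v = 0"
proof -
  have \<phi>d: "\<And>x. (\<phi> has_derivative (\<lambda>v. g x \<bullet> v)) (at x)" and KU: "K \<subseteq> U"
    using tf unfolding test_fun_def K_def by blast+
  have \<phi>c: "continuous_on UNIV \<phi>" and gc: "continuous_on UNIV g"
    using test_fun_continuous[OF tf] by blast+
  have "{x. \<phi> x \<noteq> 0} \<subseteq> K" unfolding K_def by (rule closure_subset)
  then have \<phi>0: "\<phi> y = 0" if "y \<notin> K" for y using that by blast
  have oK: "open (- K)" unfolding K_def by (simp add: open_Compl)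
  have V0: "V y = 0" if "y \<notin> K" for y using that \<phi>0 by (simp add: V_def)
  have V'0: "V' y w = 0" if "y \<notin> K" for y w
  proof -
    have "g y = 0" using test_fun_gradient_off_support[OF tf] that unfolding K_def by blast
    then show ?thesis using \<phi>0[OF that] by (simp add: V'_def)
  qed
  show "x \<notin> K \<Longrightarrow> V x = 0" "x \<notin> K \<Longrightarrow> V' x v = 0" using V0 V'0 by blast+
  show "(V has_derivative V' x) (at x)"
  proof (cases "x \<in> U")
    case True
    have "((\<lambda>y. (\<phi> y)\<^sup>2 *\<^sub>R F y) has_derivative V' x) (at x)"
      using \<phi>d[of x] Fd[OF True] True unfolding V'_def
      by (auto intro!: derivative_eq_intros simp: power2_eq_square algebra_simps)
    then show ?thesis
      by (rule has_derivative_transform_within_open[OF _ U True]) (simp add: V_def)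
  next
    case False
    then have "x \<in> - K" using KU by blast
    have "((\<lambda>y. 0) has_derivative (\<lambda>v. 0)) (at x)" by simp
    then have "(V has_derivative (\<lambda>v. 0)) (at x)"
      by (rule has_derivative_transform_within_open[OF _ oK \<open>x \<in> - K\<close>]) (simp add: V0)
    moreover have "V' x = (\<lambda>v. 0)" using False by (simp add: V'_def fun_eq_iff)
    ultimately show ?thesis by simp
  qed
  text \<open>V' is continuous on U by construction and vanishes on the open set outside K.\<close>
  have "continuous_on U (\<lambda>x. (2 * \<phi> x * (g x \<bullet> v)) *\<^sub>R F x + (\<phi> x)\<^sup>2 *\<^sub>R F' x v)"
  proof -
    have "continuous_on U F"
      using Fd by (meson continuous_at_imp_continuous_on has_derivative_continuous)
    then show ?thesis
      by (intro continuous_intros continuous_on_subset[OF \<phi>c] continuous_on_subset[OF gc] F'c) auto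
  qed
  then have "continuous_on U (\<lambda>x. V' x v)" by (rule continuous_on_eq) (simp add: V'_def)
  moreover have "continuous_on (- K) (\<lambda>x. V' x v)"
    by (rule continuous_on_eq[of _ "\<lambda>x. 0"]) (auto simp: V'0)
  ultimately have "continuous_on (U \<union> - K) (\<lambda>x. V' x v)"
    by (rule continuous_on_open_Un[OF U oK])
  moreover have "U \<union> - K = UNIV" using KU by blast
  ultimately show "continuous_on UNIV (\<lambda>x. V' x v)" by simp
qed

text \<open>The vector field method for test functions: if \<open>W \<le> div F - |F|\<^sup>2\<close> on U then
  \<open>W \<phi>\<^sup>2 \<le> |\<nabla>\<phi>|\<^sup>2 + div (\<phi>\<^sup>2 F)\<close> pointwise, since the difference is \<open>|\<nabla>\<phi> + \<phi> F|\<^sup>2\<close> plus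
  a nonnegative term, and the divergence integrates to zero.\<close>
lemma vector_field_hardy_test:
  fixes U :: "(real^'n) set" and F :: "real^'n \<Rightarrow> real^'n" and W :: "real^'n \<Rightarrow> real"
  assumes U: "open U"
    and Fd: "\<And>x. x \<in> U \<Longrightarrow> (F has_derivative F' x) (at x)"
    and F'c: "\<And>v. continuous_on U (\<lambda>x. F' x v)"
    and W0: "\<And>x. W x \<ge> 0"
    and defect: "\<And>x. x \<in> U \<Longrightarrow> W x \<le> trace_map (F' x) - (norm (F x))\<^sup>2"
    and tf: "test_fun U \<phi> g"
  shows "(\<integral>\<^sup>+x\<in>U. ennreal (W x * (\<phi> x)\<^sup>2) \<partial>lborel) \<le> (\<integral>\<^sup>+x\<in>U. ennreal ((norm (g x))\<^sup>2) \<partial>lborel)"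
proof -
  define K where "K = closure {x. \<phi> x \<noteq> 0}"
  have Kc: "compact K" and KU: "K \<subseteq> U" using tf unfolding test_fun_def K_def by blast+
  have gc: "continuous_on UNIV g" using test_fun_continuous[OF tf] by blast
  have g0: "g x = 0" if "x \<notin> K" for x using test_fun_gradient_off_support[OF tf] that K_def by blast
  define V' where "V' x v = (if x \<in> U then (2 * \<phi> x * (g x \<bullet> v)) *\<^sub>R F x + (\<phi> x)\<^sup>2 *\<^sub>R F' x v else 0)" for x v
  note cutoff = cutoff_field[OF U Fd F'c tf, folded K_def, unfolded V'_def[symmetric]]
  define divV where "divV x = trace_map (V' x)" for x
  have idiv: "integrable lborel divV" "integral\<^sup>L lborel divV = 0"
    using divergence_integral_zero[OF cutoff(1,2) Kc cutoff(3,4)] unfolding divV_def by auto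
  have divV_eq: "divV x = (if x \<in> U then 2 * \<phi> x * (g x \<bullet> F x) + (\<phi> x)\<^sup>2 * trace_map (F' x) else 0)" for x
  proof (cases "x \<in> U")
    case True
    then have "V' x = (\<lambda>v. (2 * \<phi> x) *\<^sub>R ((g x \<bullet> v) *\<^sub>R F x) + (\<phi> x)\<^sup>2 *\<^sub>R F' x v)"
      by (simp add: V'_def fun_eq_iff)
    then have "divV x = trace_map (\<lambda>v. (2 * \<phi> x) *\<^sub>R ((g x \<bullet> v) *\<^sub>R F x) + (\<phi> x)\<^sup>2 *\<^sub>R F' x v)"
      by (simp only: divV_def)
    also have "\<dots> = 2 * \<phi> x * (g x \<bullet> F x) + (\<phi> x)\<^sup>2 * trace_map (F' x)"
      by (simp only: trace_map_add trace_map_scale trace_map_rank1)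
    finally show ?thesis using True by simp
  next
    case False
    then have "V' x = (\<lambda>v. 0)" by (simp add: V'_def fun_eq_iff)
    then show ?thesis using False by (simp add: divV_def trace_map_def)
  qed
  define Z where "Z x = (norm (g x))\<^sup>2 + divV x" for x
  have ig: "integrable lborel (\<lambda>x. (norm (g x))\<^sup>2)"
    by (rule continuous_compact_support_integrable[OF _ Kc]) (auto intro!: continuous_intros gc g0)
  have iZ: "integrable lborel Z" unfolding Z_def using ig idiv by auto
  have intZ: "integral\<^sup>L lborel Z = integral\<^sup>L lborel (\<lambda>x. (norm (g x))\<^sup>2)"
    unfolding Z_def using ig idiv by (simp add: integral_add)
  have Z_ge: "W x * (\<phi> x)\<^sup>2 * indicator U x \<le> Z x" for x
  proof (cases "x \<in> U")
    case True
    have "(norm (g x + \<phi> x *\<^sub>R F x))\<^sup>2 = (norm (g x))\<^sup>2 + 2 * \<phi> x * (g x \<bullet> F x) + (\<phi> x)\<^sup>2 * (norm (F x))\<^sup>2"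
      unfolding power2_norm_eq_inner
      by (simp add: inner_add_left inner_add_right inner_commute power2_eq_square algebra_simps)
    moreover have "(\<phi> x)\<^sup>2 * W x \<le> (\<phi> x)\<^sup>2 * (trace_map (F' x) - (norm (F x))\<^sup>2)"
      using defect[OF True] by (simp add: mult_left_mono)
    ultimately show ?thesis using True zero_le_power2[of "norm (g x + \<phi> x *\<^sub>R F x)"]
      by (simp add: Z_def divV_eq algebra_simps)
  next
    case False
    then have "x \<notin> K" using KU by blast
    then show ?thesis using False by (simp add: Z_def divV_eq g0)
  qed
  have Z0: "0 \<le> Z x" for x
    using Z_ge[of x] W0[of x] by (smt (verit) indicator_pos_le mult_nonneg_nonneg zero_le_power2)
  have "(\<integral>\<^sup>+x\<in>U. ennreal (W x * (\<phi> x)\<^sup>2) \<partial>lborel) \<le> (\<integral>\<^sup>+x. ennreal (Z x) \<partial>lborel)"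
  proof (rule nn_integral_mono)
    fix x show "ennreal (W x * (\<phi> x)\<^sup>2) * indicator U x \<le> ennreal (Z x)"
      using Z_ge[of x] by (cases "x \<in> U") (auto simp: Z0)
  qed
  also have "\<dots> = ennreal (integral\<^sup>L lborel (\<lambda>x. (norm (g x))\<^sup>2))"
    using nn_integral_eq_integral[OF iZ] Z0 intZ by simp
  also have "\<dots> = (\<integral>\<^sup>+x. ennreal ((norm (g x))\<^sup>2) \<partial>lborel)"
    by (rule nn_integral_eq_integral[OF ig, symmetric]) simp
  also have "\<dots> = (\<integral>\<^sup>+x\<in>U. ennreal ((norm (g x))\<^sup>2) \<partial>lborel)"
    by (rule nn_integral_cong) (use KU g0 in \<open>auto simp: indicator_def\<close>)
  finally show ?thesis .
qed

lemma vector_field_hardy: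
  fixes U :: "(real^'n) set" and F :: "real^'n \<Rightarrow> real^'n" and W :: "real^'n \<Rightarrow> real"
  assumes U: "open U"
    and Fd: "\<And>x. x \<in> U \<Longrightarrow> (F has_derivative F' x) (at x)"
    and F'c: "\<And>v. continuous_on U (\<lambda>x. F' x v)"
    and Wm: "W \<in> borel_measurable lborel" and W0: "\<And>x. W x \<ge> 0"
    and defect: "\<And>x. x \<in> U \<Longrightarrow> W x \<le> trace_map (F' x) - (norm (F x))\<^sup>2"
    and H: "H10 U u G"
  shows "(\<integral>\<^sup>+x\<in>U. ennreal (W x * (u x)\<^sup>2) \<partial>lborel) \<le> (\<integral>\<^sup>+x\<in>U. ennreal ((norm (G x))\<^sup>2) \<partial>lborel)"
  using weighted_ineq_extends_to_H10[OF U Wm W0 vector_field_hardy_test[OF U Fd F'c W0 defect] H] .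


section \<open>Scalar inequalities behind the error term\<close>

text \<open>In the following, r stands for \<open>|x|\<close>, L for \<open>-ln |x|\<close>, dv for the distance function d,
  D for \<open>|\<nabla>d|\<close>, p for \<open>\<nabla>d \<cdot> x\<close>, lp for \<open>\<Delta>d\<close> and \<open>\<beta> = N/2 + 1/(2L)\<close>.  Taylor expansion
  gives \<open>|p - d| \<le> C0 r\<^sup>2\<close>.  The first lemma shows that the leading part of the error term is
  at least 1 once A is large; the second bounds the remaining part from below.\<close>
lemma error_leading_part_ge_1:
  fixes r L N dv lp D p M1 C0 Dm A :: real
  assumes r: "r > 0" and L: "L \<ge> 2" and N: "N \<ge> 2"
    and dv: "dv > 0" and lp: "\<bar>lp\<bar> \<le> M1" and D1: "D \<ge> 1" and DDm: "D \<le> Dm"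
    and p_le: "p \<le> D * r" and E: "\<bar>p - dv\<bar> \<le> C0 * r\<^sup>2" and A: "A = 2 * (N + 1) * Dm"
    and small: "2 * A * C0 * r + (Dm * r + C0 * r\<^sup>2) * M1 \<le> 1"
  defines "\<beta> \<equiv> N / 2 + 1 / (2 * L)"
  shows "1 \<le> 2 * D\<^sup>2 + A * (N + 1 - 2 * \<beta>) * dv / r + 2 * A * (p - dv) / r + dv * lp
              - 2 * \<beta> * dv * p / r\<^sup>2"
proof -
  have Apos: "A > 0" using A N D1 DDm by simp
  have \<beta>_hi: "2 * \<beta> \<le> N + 1 / 2" unfolding \<beta>_def using L by (simp add: field_simps)
  have "1 / (2 * L) > 0" using L by simp
  then have \<beta>0: "\<beta> > 0" unfolding \<beta>_def using N by linarith
  have dv_le: "dv \<le> Dm * r + C0 * r\<^sup>2"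
    using E p_le mult_right_mono[OF DDm, of r] r by linarith
  have t1: "2 * \<beta> * dv * p / r\<^sup>2 \<le> 2 * \<beta> * D * dv / r"
  proof -
    have "2 * \<beta> * dv * p \<le> 2 * \<beta> * dv * (D * r)" using p_le \<beta>0 dv by (intro mult_left_mono) auto
    then show ?thesis using r by (simp add: divide_right_mono power2_eq_square field_simps)
  qed
  have t2: "2 * \<beta> * D * dv / r \<le> A * (N + 1 - 2 * \<beta>) * dv / r"
  proof -
    have "2 * \<beta> * D \<le> (N + 1) * Dm"
      using mult_mono[OF _ DDm, of "2 * \<beta>" "N + 1"] \<beta>_hi \<beta>0 D1 by linarith
    also have "\<dots> = A * (1 / 2)" using A by simp
    also have "\<dots> \<le> A * (N + 1 - 2 * \<beta>)" using \<beta>_hi Apos by (intro mult_left_mono) auto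
    finally show ?thesis using dv r by (intro divide_right_mono mult_right_mono) auto
  qed
  have t3: "- (2 * A * C0 * r) \<le> 2 * A * (p - dv) / r"
  proof -
    have "2 * A * (- (p - dv)) \<le> 2 * A * (C0 * r\<^sup>2)" using E Apos by (intro mult_left_mono) auto
    then show ?thesis using r by (simp add: power2_eq_square field_simps)
  qed
  have t4: "- ((Dm * r + C0 * r\<^sup>2) * M1) \<le> dv * lp"
  proof -
    have "\<bar>dv * lp\<bar> \<le> (Dm * r + C0 * r\<^sup>2) * M1" using dv_le lp dv by (simp add: abs_mult mult_mono)
    then show ?thesis by linarith
  qed
  have "1 \<le> D\<^sup>2" using D1 by (simp add: one_le_power)
  then show ?thesis using t1 t2 t3 t4 small by linarith
qed

lemma error_remainder_bound:
  fixes r L N dv lp p M1 C0 m :: real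
  assumes r: "r > 0" and L: "L \<ge> 2" and N: "N \<ge> 2" and lp: "\<bar>lp\<bar> \<le> M1"
    and E: "\<bar>p - dv\<bar> \<le> C0 * r\<^sup>2" and C0: "C0 \<ge> 0" and m: "0 < m" "m \<le> 1"
  defines "\<beta> \<equiv> N / 2 + 1 / (2 * L)"
  shows "- (M1 + (N + 1) * C0) \<le> m * (- lp + 2 * \<beta> * (p - dv) / r\<^sup>2)"
proof -
  have \<beta>_hi: "2 * \<beta> \<le> N + 1" unfolding \<beta>_def using L by (simp add: field_simps)
  have "1 / (2 * L) > 0" using L by simp
  then have \<beta>0: "\<beta> > 0" unfolding \<beta>_def using N by linarith
  have "\<bar>2 * \<beta> * (p - dv)\<bar> \<le> (N + 1) * (C0 * r\<^sup>2)"
    using mult_mono[OF \<beta>_hi E] \<beta>0 C0 N by (simp add: abs_mult)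
  then have "\<bar>2 * \<beta> * (p - dv) / r\<^sup>2\<bar> \<le> (N + 1) * C0" using r by (simp add: abs_div divide_le_eq)
  then have B: "- (M1 + (N + 1) * C0) \<le> - lp + 2 * \<beta> * (p - dv) / r\<^sup>2" using lp by linarith
  show ?thesis
  proof (cases "- lp + 2 * \<beta> * (p - dv) / r\<^sup>2 \<ge> 0")
    case True
    then show ?thesis using m lp C0 N by (smt (verit) mult_nonneg_nonneg)
  next
    case False
    then have "- lp + 2 * \<beta> * (p - dv) / r\<^sup>2 \<le> m * (- lp + 2 * \<beta> * (p - dv) / r\<^sup>2)"
      using m mult_right_mono_neg[of m 1 "- lp + 2 * \<beta> * (p - dv) / r\<^sup>2"] by simp
    then show ?thesis using B by linarith
  qed
qed

text \<open>The error term of the field F, written out in the scalar quantities above, is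
  nonnegative, and the cutoff factor \<open>m = 1 - \<kappa> (d + A r)\<close> is positive.\<close>
lemma error_term_nonneg:
  fixes r L N dv lp D p M1 C0 Dm \<kappa> A :: real
  assumes r: "r > 0" and L: "L \<ge> 2" and N: "N \<ge> 2"
    and dv: "dv > 0" and lp: "\<bar>lp\<bar> \<le> M1" and D1: "D \<ge> 1" and DDm: "D \<le> Dm"
    and pD: "\<bar>p\<bar> \<le> D * r" and E: "\<bar>p - dv\<bar> \<le> C0 * r\<^sup>2" and C0: "C0 \<ge> 0"
    and \<kappa>: "\<kappa> = M1 + (N + 1) * C0 + 1" and A: "A = 2 * (N + 1) * Dm"
    and small1: "2 * A * C0 * r + (Dm * r + C0 * r\<^sup>2) * M1 \<le> 1"
    and small2: "\<kappa> * (Dm * r + C0 * r\<^sup>2 + A * r) < 1"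
  defines "m \<equiv> 1 - \<kappa> * (dv + A * r)"
    and "\<beta> \<equiv> N / 2 + 1 / (2 * L)"
  shows "m > 0"
    and "0 \<le> - (2 * (- \<kappa> * (D\<^sup>2 + (A / r) * p)) + m * lp
                 + dv * (- \<kappa> * (lp + A * (N / r - r\<^sup>2 / r ^ 3))))
              + 2 * (\<beta> / r\<^sup>2) * (m * p - \<kappa> * dv * (p + (A / r) * r\<^sup>2) - dv * m)"
proof -
  have M1: "M1 \<ge> 0" using lp by linarith
  have \<kappa>1: "\<kappa> \<ge> 1" using \<kappa> M1 C0 N by (smt (verit) mult_nonneg_nonneg)
  have A0: "A \<ge> 0" using A N D1 DDm by simp
  have p_le: "p \<le> D * r" using pD by linarith
  have "dv \<le> Dm * r + C0 * r\<^sup>2"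
    using E p_le mult_right_mono[OF DDm, of r] r by linarith
  then have "\<kappa> * (dv + A * r) \<le> \<kappa> * (Dm * r + C0 * r\<^sup>2 + A * r)"
    using \<kappa>1 by (intro mult_left_mono) auto
  then show m0: "m > 0" unfolding m_def using small2 by linarith
  have m1: "m \<le> 1" unfolding m_def using \<kappa>1 dv A0 r by (smt (verit) mult_nonneg_nonneg)
  have "- (2 * (- \<kappa> * (D\<^sup>2 + (A / r) * p)) + m * lp + dv * (- \<kappa> * (lp + A * (N / r - r\<^sup>2 / r ^ 3))))
          + 2 * (\<beta> / r\<^sup>2) * (m * p - \<kappa> * dv * (p + (A / r) * r\<^sup>2) - dv * m)
      = m * (- lp + 2 * \<beta> * (p - dv) / r\<^sup>2)
        + \<kappa> * (2 * D\<^sup>2 + A * (N + 1 - 2 * \<beta>) * dv / r + 2 * A * (p - dv) / r + dv * lp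
               - 2 * \<beta> * dv * p / r\<^sup>2)"
    using r by (simp add: field_simps power2_eq_square power3_eq_cube)
  moreover have "\<kappa> * 1 \<le> \<kappa> * (2 * D\<^sup>2 + A * (N + 1 - 2 * \<beta>) * dv / r + 2 * A * (p - dv) / r + dv * lp
               - 2 * \<beta> * dv * p / r\<^sup>2)"
    using error_leading_part_ge_1[OF r L N dv lp D1 DDm p_le E A small1] \<kappa>1
    unfolding \<beta>_def by (intro mult_left_mono) auto
  moreover have "- (M1 + (N + 1) * C0) \<le> m * (- lp + 2 * \<beta> * (p - dv) / r\<^sup>2)"
    using error_remainder_bound[OF r L N lp E C0 m0 m1] unfolding \<beta>_def .
  ultimately show "0 \<le> - (2 * (- \<kappa> * (D\<^sup>2 + (A / r) * p)) + m * lp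
                 + dv * (- \<kappa> * (lp + A * (N / r - r\<^sup>2 / r ^ 3))))
              + 2 * (\<beta> / r\<^sup>2) * (m * p - \<kappa> * dv * (p + (A / r) * r\<^sup>2) - dv * m)"
    using \<kappa> by linarith
qed

text \<open>Algebraic identity for \<open>div F - |F|\<^sup>2\<close>: T stands for \<open>\<Delta>\<delta>\<close>, G2 for \<open>|\<nabla>\<delta>|\<^sup>2\<close> and
  X for \<open>\<nabla>\<delta> \<cdot> x\<close>; the terms involving G2 cancel and \<open>\<beta>\<close> produces the constant
  \<open>N\<^sup>2/4 + 1/(4L\<^sup>2)\<close>.\<close>
lemma defect_identity:
  fixes G2 T X dl r L N :: real
  assumes r: "r \<noteq> 0" and L: "L \<noteq> 0" and dl: "dl \<noteq> 0"
  defines "\<beta> \<equiv> N / 2 + 1 / (2 * L)"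
  shows "G2 / dl\<^sup>2 - (1 / dl) * T + (1 / (2 * L\<^sup>2 * r ^ 4) - 2 * \<beta> / r ^ 4) * r\<^sup>2 + \<beta> / r\<^sup>2 * N
     - (G2 / dl\<^sup>2 - 2 * (\<beta> / r\<^sup>2) * X / dl + (\<beta> / r\<^sup>2)\<^sup>2 * r\<^sup>2)
     = (- T + 2 * (\<beta> / r\<^sup>2) * (X - dl)) / dl + (N\<^sup>2 / 4 + 1 / (4 * L\<^sup>2)) / r\<^sup>2"
proof -
  have e1: "(1 / (2 * L\<^sup>2 * r ^ 4) - 2 * \<beta> / r ^ 4) * r\<^sup>2 = (1 / (2 * L\<^sup>2) - 2 * \<beta>) / r\<^sup>2"
    using r by (simp add: field_simps power2_eq_square power4_eq_xxxx)
  have e2: "(\<beta> / r\<^sup>2)\<^sup>2 * r\<^sup>2 = \<beta>\<^sup>2 / r\<^sup>2" using r by (simp add: field_simps power2_eq_square)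
  have e3: "N * \<beta> - \<beta>\<^sup>2 + 1 / (2 * L\<^sup>2) = N\<^sup>2 / 4 + 1 / (4 * L\<^sup>2)"
    unfolding \<beta>_def using L by (simp add: field_simps power2_eq_square)
  have "G2 / dl\<^sup>2 - (1 / dl) * T + (1 / (2 * L\<^sup>2) - 2 * \<beta>) / r\<^sup>2 + \<beta> / r\<^sup>2 * N
     - (G2 / dl\<^sup>2 - 2 * (\<beta> / r\<^sup>2) * X / dl + \<beta>\<^sup>2 / r\<^sup>2)
     = (- T + 2 * (\<beta> / r\<^sup>2) * (X - dl)) / dl + (N * \<beta> - \<beta>\<^sup>2 + 1 / (2 * L\<^sup>2)) / r\<^sup>2"
    using r dl by (simp add: field_simps power2_eq_square eval_nat_numeral)
  then show ?thesis unfolding e1 e2 e3 .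
qed


section \<open>The boundary near the origin as a C^2 graph\<close>

lemma hyp_proj_linear: "bounded_linear (hyp_proj nu)"
  unfolding hyp_proj_def by (auto intro!: bounded_linear_intros)

lemma hyp_proj_deriv: "(hyp_proj nu has_derivative hyp_proj nu) (at x)"
  by (rule bounded_linear_imp_has_derivative[OF hyp_proj_linear])

lemma hyp_proj_symmetric: "hyp_proj nu a \<bullet> b = a \<bullet> hyp_proj nu b"
  unfolding hyp_proj_def by (simp add: inner_diff_left inner_diff_right inner_commute algebra_simps)

lemma hyp_proj_orthogonal: "norm nu = 1 \<Longrightarrow> hyp_proj nu a \<bullet> nu = 0"
  unfolding hyp_proj_def by (simp add: inner_diff_left power2_norm_eq_inner[symmetric])

lemma unit_inner_self: "norm nu = 1 \<Longrightarrow> nu \<bullet> nu = 1"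
  by (metis norm_eq_sqrt_inner real_sqrt_eq_1_iff)

lemma hyp_proj_pythagoras: "norm nu = 1 \<Longrightarrow> (norm x)\<^sup>2 = (norm (hyp_proj nu x))\<^sup>2 + (x \<bullet> nu)\<^sup>2"
  unfolding hyp_proj_def power2_norm_eq_inner
  by (simp add: inner_diff_left inner_diff_right inner_commute unit_inner_self power2_eq_square algebra_simps)

lemma hyp_proj_norm_le: "norm nu = 1 \<Longrightarrow> norm (hyp_proj nu x) \<le> norm x"
proof -
  assume n: "norm nu = 1"
  have "(norm (hyp_proj nu x))\<^sup>2 \<le> (norm x)\<^sup>2" using hyp_proj_pythagoras[OF n, of x] by simp
  then show ?thesis by (simp add: power2_le_iff_abs_le)
qed

lemma hyp_proj_continuous_on: "continuous_on S f \<Longrightarrow> continuous_on S (\<lambda>x. hyp_proj nu (f x))"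
  unfolding hyp_proj_def by (intro continuous_intros)

lemma linear_norm_le_basis_sum:
  fixes f :: "'a::euclidean_space \<Rightarrow> 'b::real_normed_vector"
  assumes "linear f"
  shows "norm (f w) \<le> (\<Sum>i\<in>Basis. norm (f i)) * norm w"
proof -
  have "f w = (\<Sum>i\<in>Basis. (w \<bullet> i) *\<^sub>R f i)"
    using assms euclidean_representation[of w] by (metis (no_types, lifting) linear_sum linear_scale sum.cong)
  then have "norm (f w) \<le> (\<Sum>i\<in>Basis. norm ((w \<bullet> i) *\<^sub>R f i))" by (metis norm_sum)
  also have "\<dots> \<le> (\<Sum>i\<in>Basis. norm w * norm (f i))"
    by (intro sum_mono) (simp add: Basis_le_norm mult_right_mono)
  finally show ?thesis by (simp add: sum_distrib_left mult.commute)
qed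

text \<open>The boundary near 0 is the graph \<open>x \<cdot> \<nu> = h(Px)\<close> of a C^2 function h over the
  hyperplane \<open>\<nu>\<^sup>\<perp>\<close>, with gradient g and Hessian H, passing through the origin.\<close>
locale C2_graph =
  fixes nu :: "real^'n" and h :: "real^'n \<Rightarrow> real" and g :: "real^'n \<Rightarrow> real^'n"
    and H :: "real^'n \<Rightarrow> real^'n \<Rightarrow> real^'n"
  assumes nu1: "norm nu = 1"
    and hd: "\<And>y. (h has_derivative (\<lambda>v. g y \<bullet> v)) (at y)"
    and gd: "\<And>y. (g has_derivative H y) (at y)"
    and Hc: "\<And>v. continuous_on UNIV (\<lambda>y. H y v)"
    and h0: "h 0 = 0"
begin

abbreviation "P \<equiv> hyp_proj nu"

text \<open>Vertical distance to the graph, positive below it, with its gradient, Hessian and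
  Laplacian.\<close>
definition "d x = h (P x) - x \<bullet> nu"
definition "grad_d x = P (g (P x)) - nu"
definition "hess_d x = (\<lambda>v. P (H (P x) (P v)))"
definition "lap_d x = trace_map (hess_d x)"

lemma d_deriv: "(d has_derivative (\<lambda>v. grad_d x \<bullet> v)) (at x)"
proof -
  have "((\<lambda>x. h (P x)) has_derivative (\<lambda>v. g (P x) \<bullet> P v)) (at x)"
    using has_derivative_compose[OF hyp_proj_deriv hd] .
  then have "(d has_derivative (\<lambda>v. g (P x) \<bullet> P v - v \<bullet> nu)) (at x)"
    unfolding d_def[abs_def] by (auto intro!: derivative_eq_intros)
  moreover have "(\<lambda>v. g (P x) \<bullet> P v - v \<bullet> nu) = (\<lambda>v. grad_d x \<bullet> v)"
    by (auto simp: grad_d_def inner_diff_left inner_diff_right hyp_proj_symmetric inner_commute)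
  ultimately show ?thesis by simp
qed

lemma grad_d_deriv: "(grad_d has_derivative hess_d x) (at x)"
proof -
  have "((\<lambda>x. g (P x)) has_derivative (\<lambda>v. H (P x) (P v))) (at x)"
    using has_derivative_compose[OF hyp_proj_deriv gd] .
  then have "((\<lambda>x. P (g (P x))) has_derivative (\<lambda>v. P (H (P x) (P v)))) (at x)"
    using has_derivative_compose[OF _ hyp_proj_deriv] by blast
  then show ?thesis unfolding grad_d_def[abs_def] hess_d_def by (auto intro!: derivative_eq_intros)
qed

lemma gradient_continuous: "continuous_on UNIV g"
  using gd by (meson continuous_at_imp_continuous_on has_derivative_continuous)

lemma grad_d_cont: "continuous_on S grad_d"
  unfolding grad_d_def[abs_def]
  by (intro continuous_intros hyp_proj_continuous_on continuous_on_compose2[OF gradient_continuous]) auto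

lemma hess_d_cont: "continuous_on S (\<lambda>x. hess_d x v)"
  unfolding hess_d_def
  by (intro continuous_intros hyp_proj_continuous_on continuous_on_compose2[OF Hc]) auto

lemma lap_d_cont: "continuous_on S lap_d"
  unfolding lap_d_def trace_map_def by (intro continuous_intros hess_d_cont)

lemma d_cont: "continuous_on S d"
  using d_deriv by (meson continuous_at_imp_continuous_on has_derivative_continuous)

text \<open>The gradient of d has a unit normal component, hence length at least 1.\<close>
lemma grad_d_norm: "norm (grad_d x) \<ge> 1"
proof -
  have "(norm (grad_d x))\<^sup>2 = (norm (P (g (P x))))\<^sup>2 + 1"
    unfolding grad_d_def power2_norm_eq_inner
    using hyp_proj_orthogonal[OF nu1, of "g (P x)"] unit_inner_self[OF nu1]
    by (simp add: inner_diff_left inner_diff_right inner_commute)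
  then have "1\<^sup>2 \<le> (norm (grad_d x))\<^sup>2" by simp
  then show ?thesis by (rule power2_le_imp_le) simp
qed

lemma hessian_linear: "linear (H y)"
  using gd[of y] has_derivative_linear by blast

lemma hessian_bound: "\<exists>M\<ge>0. \<forall>y\<in>cball 0 1. \<forall>w. norm (H y w) \<le> M * norm w"
proof -
  have "continuous_on (cball 0 1) (\<lambda>y. \<Sum>i\<in>Basis. norm (H y i))"
    by (intro continuous_intros continuous_on_subset[OF Hc]) auto
  then obtain M where M: "M \<ge> 0" "\<And>y. y \<in> cball 0 1 \<Longrightarrow> norm (\<Sum>i\<in>Basis. norm (H y i)) \<le> M"
    by (rule continuous_on_compact_bound[OF compact_cball]) blast
  have "norm (H y w) \<le> M * norm w" if "y \<in> cball 0 1" for y w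
    using linear_norm_le_basis_sum[OF hessian_linear, of y w] M(2)[OF that]
    by (smt (verit) mult_right_mono norm_ge_zero real_norm_def)
  then show ?thesis using M(1) by blast
qed

lemma graph_taylor_bound:
  assumes M: "M \<ge> 0" "\<forall>y\<in>cball 0 1. \<forall>w. norm (H y w) \<le> M * norm w"
    and z: "norm z \<le> 1"
  shows "\<bar>g z \<bullet> z - h z\<bar> \<le> M * (norm z)\<^sup>2"
proof (cases "z = 0")
  case True then show ?thesis using h0 by simp
next
  case False
  define \<psi> where "\<psi> t = t * (g (t *\<^sub>R z) \<bullet> z) - h (t *\<^sub>R z)" for t :: real
  have der: "(\<psi> has_real_derivative (t * (H (t *\<^sub>R z) z \<bullet> z))) (at t)" for t
  proof -
    have l: "((\<lambda>t::real. t *\<^sub>R z) has_derivative (\<lambda>s. s *\<^sub>R z)) (at t)"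
      by (auto intro!: derivative_eq_intros)
    have dh: "((\<lambda>t. h (t *\<^sub>R z)) has_derivative (\<lambda>s. g (t *\<^sub>R z) \<bullet> (s *\<^sub>R z))) (at t)"
      using has_derivative_compose[OF l hd] .
    have dg: "((\<lambda>t. g (t *\<^sub>R z)) has_derivative (\<lambda>s. H (t *\<^sub>R z) (s *\<^sub>R z))) (at t)"
      using has_derivative_compose[OF l gd] .
    have "(\<psi> has_derivative (\<lambda>s. s * (g (t *\<^sub>R z) \<bullet> z) + t * (H (t *\<^sub>R z) (s *\<^sub>R z) \<bullet> z) - g (t *\<^sub>R z) \<bullet> (s *\<^sub>R z))) (at t)"
      unfolding \<psi>_def[abs_def] using dh dg by (auto intro!: derivative_eq_intros)
    moreover have "(\<lambda>s. s * (g (t *\<^sub>R z) \<bullet> z) + t * (H (t *\<^sub>R z) (s *\<^sub>R z) \<bullet> z) - g (t *\<^sub>R z) \<bullet> (s *\<^sub>R z))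
        = (*) (t * (H (t *\<^sub>R z) z \<bullet> z))"
      using hessian_linear[of "t *\<^sub>R z"] by (auto simp: fun_eq_iff linear_scale)
    ultimately show ?thesis by (simp add: has_field_derivative_def)
  qed
  obtain \<xi> where \<xi>: "0 < \<xi>" "\<xi> < 1" and eq: "\<psi> 1 - \<psi> 0 = (1 - 0) * (\<xi> * (H (\<xi> *\<^sub>R z) z \<bullet> z))"
    using MVT2[of 0 1 \<psi> "\<lambda>t. t * (H (t *\<^sub>R z) z \<bullet> z)"] der by auto
  have "\<psi> 1 - \<psi> 0 = g z \<bullet> z - h z" by (simp add: \<psi>_def h0)
  then have "\<bar>g z \<bullet> z - h z\<bar> = \<bar>\<xi> * (H (\<xi> *\<^sub>R z) z \<bullet> z)\<bar>" using eq by simp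
  also have "\<dots> = \<xi> * \<bar>H (\<xi> *\<^sub>R z) z \<bullet> z\<bar>" using \<xi> by (simp add: abs_mult)
  also have "\<dots> \<le> 1 * (norm (H (\<xi> *\<^sub>R z) z) * norm z)"
    using \<xi> Cauchy_Schwarz_ineq2[of "H (\<xi> *\<^sub>R z) z" z] by (intro mult_mono) auto
  also have "\<dots> \<le> (M * norm z) * norm z"
  proof -
    have "\<xi> *\<^sub>R z \<in> cball 0 1" using \<xi> z by (simp add: mult_le_one)
    then have "norm (H (\<xi> *\<^sub>R z) z) \<le> M * norm z" using M by blast
    then show ?thesis by (simp add: mult_right_mono)
  qed
  finally show ?thesis by (simp add: power2_eq_square mult.assoc)
qed

text \<open>The quantity \<open>\<nabla>d \<cdot> x - d\<close>, which must be small for the error term, is the Taylor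
  remainder of h at the projected point; it is therefore \<open>O(|x|\<^sup>2)\<close>.\<close>
lemma radial_derivative_identity: "grad_d x \<bullet> x - d x = g (P x) \<bullet> P x - h (P x)"
  unfolding grad_d_def d_def by (simp add: inner_diff_left inner_diff_right hyp_proj_symmetric inner_commute)

lemma radial_taylor_bound: "\<exists>C0\<ge>0. \<forall>x. norm x \<le> 1 \<longrightarrow> \<bar>grad_d x \<bullet> x - d x\<bar> \<le> C0 * (norm x)\<^sup>2"
proof -
  obtain M where M: "M \<ge> 0" "\<forall>y\<in>cball 0 1. \<forall>w. norm (H y w) \<le> M * norm w"
    using hessian_bound by blast
  have "\<bar>grad_d x \<bullet> x - d x\<bar> \<le> M * (norm x)\<^sup>2" if "norm x \<le> 1" for x
  proof -
    have pn: "norm (P x) \<le> norm x" by (rule hyp_proj_norm_le[OF nu1])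
    have "\<bar>grad_d x \<bullet> x - d x\<bar> \<le> M * (norm (P x))\<^sup>2"
      unfolding radial_derivative_identity by (rule graph_taylor_bound[OF M]) (use pn that in linarith)
    also have "\<dots> \<le> M * (norm x)\<^sup>2" using pn M(1) by (intro mult_left_mono power_mono) auto
    finally show ?thesis .
  qed
  then show ?thesis using M(1) by blast
qed

definition admissible :: "real \<Rightarrow> real \<Rightarrow> real \<Rightarrow> bool" where
  "admissible C0 M1 Dm \<longleftrightarrow> C0 \<ge> 0 \<and>
     (\<forall>x. norm x \<le> 1 \<longrightarrow> \<bar>grad_d x \<bullet> x - d x\<bar> \<le> C0 * (norm x)\<^sup>2) \<and>
     (\<forall>x\<in>cball 0 1. \<bar>lap_d x\<bar> \<le> M1) \<and> (\<forall>x\<in>cball 0 1. norm (grad_d x) \<le> Dm)"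

lemma admissible_exists: "\<exists>C0 M1 Dm. admissible C0 M1 Dm"
proof -
  obtain C0 where "C0 \<ge> 0" "\<forall>x. norm x \<le> 1 \<longrightarrow> \<bar>grad_d x \<bullet> x - d x\<bar> \<le> C0 * (norm x)\<^sup>2"
    using radial_taylor_bound by blast
  moreover obtain M1 where "\<And>x. x \<in> cball 0 1 \<Longrightarrow> norm (lap_d x) \<le> M1"
    using continuous_on_compact_bound[OF compact_cball lap_d_cont] by blast
  moreover obtain Dm where "\<And>x. x \<in> cball 0 1 \<Longrightarrow> norm (norm (grad_d x)) \<le> Dm"
    using continuous_on_compact_bound[OF compact_cball continuous_on_norm[OF grad_d_cont]] by blast
  ultimately have "admissible C0 M1 Dm" unfolding admissible_def by auto
  then show ?thesis by blast
qed

lemma admissible_signs: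
  assumes "admissible C0 M1 Dm"
  shows "C0 \<ge> 0" "M1 \<ge> 0" "Dm \<ge> 1"
proof -
  have "\<bar>lap_d 0\<bar> \<le> M1" "norm (grad_d 0) \<le> Dm" using assms unfolding admissible_def by auto
  then show "M1 \<ge> 0" "Dm \<ge> 1" using grad_d_norm[of 0] by linarith+
  show "C0 \<ge> 0" using assms unfolding admissible_def by blast
qed

end

section \<open>The Hardy field near a C^2 boundary point\<close>

definition hardy_weight :: "real \<Rightarrow> 'a::real_normed_vector \<Rightarrow> real" where
  "hardy_weight N x = N\<^sup>2 / 4 / (norm x)\<^sup>2 + 1 / 4 / ((norm x)\<^sup>2 * (ln (norm x))\<^sup>2)"

lemma hardy_weight_nonneg: "hardy_weight N x \<ge> 0"
  by (simp add: hardy_weight_def)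

lemma hardy_weight_measurable: "hardy_weight N \<in> borel_measurable (lborel :: 'a::euclidean_space measure)"
  unfolding hardy_weight_def[abs_def] by measurable

lemma hardy_weight_integral_split:
  fixes u :: "'a::euclidean_space \<Rightarrow> real"
  assumes u: "u \<in> borel_measurable lborel" and S: "S \<in> sets lborel"
  shows "(\<integral>\<^sup>+x\<in>S. ennreal (hardy_weight N x * (u x)\<^sup>2) \<partial>lborel)
       = ennreal (N\<^sup>2 / 4) * (\<integral>\<^sup>+x\<in>S. ennreal ((u x)\<^sup>2 / (norm x)\<^sup>2) \<partial>lborel)
         + ennreal (1/4) * (\<integral>\<^sup>+x\<in>S. ennreal ((u x)\<^sup>2 / ((norm x)\<^sup>2 * (ln (norm x))\<^sup>2)) \<partial>lborel)"
proof -
  have "ennreal (hardy_weight N x * (u x)\<^sup>2) * indicator S x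
      = ennreal (N\<^sup>2 / 4) * (ennreal ((u x)\<^sup>2 / (norm x)\<^sup>2) * indicator S x)
        + ennreal (1/4) * (ennreal ((u x)\<^sup>2 / ((norm x)\<^sup>2 * (ln (norm x))\<^sup>2)) * indicator S x)" for x
  proof -
    have "hardy_weight N x * (u x)\<^sup>2
        = N\<^sup>2 / 4 * ((u x)\<^sup>2 / (norm x)\<^sup>2) + 1/4 * ((u x)\<^sup>2 / ((norm x)\<^sup>2 * (ln (norm x))\<^sup>2))"
      unfolding hardy_weight_def by (simp add: field_simps)
    then show ?thesis
      by (cases "x \<in> S") (simp_all add: ennreal_mult[symmetric] ennreal_plus[symmetric] del: ennreal_plus)
  qed
  then show ?thesis
    using u S by (simp add: nn_integral_add nn_integral_cmult)
qed

lemma norm_has_derivative_nonzero: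
  fixes x :: "'a::real_inner"
  assumes "x \<noteq> 0"
  shows "(norm has_derivative (\<lambda>v. (x \<bullet> v) / norm x)) (at x within S)"
proof -
  have "(norm has_derivative (\<lambda>h. h \<bullet> sgn x)) (at x)" using has_derivative_norm[OF assms] by simp
  moreover have "(\<lambda>h. h \<bullet> sgn x) = (\<lambda>v. (x \<bullet> v) / norm x)"
    by (auto simp: fun_eq_iff sgn_div_norm inner_commute divide_inverse mult.commute)
  ultimately show ?thesis using has_derivative_at_withinI by fastforce
qed

text \<open>The field F built from constants C0, M1, Dm (admissible ones in the applications):
  \<open>\<delta> = d m\<close> with \<open>m = 1 - \<kappa> (d + A |x|)\<close>, and \<open>F = -\<nabla>\<delta>/\<delta> + coef x\<close> with
  \<open>coef = \<beta>/|x|\<^sup>2\<close>, \<open>\<beta> = N/2 + 1/(2 ell)\<close>, \<open>ell = -ln |x|\<close>.\<close>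
locale hardy_field = C2_graph nu h g H for nu :: "real^'n" and h g H +
  fixes C0 M1 Dm :: real
begin

definition "NN = real CARD('n)"
definition "kap = M1 + (NN + 1) * C0 + 1"
definition "A = 2 * (NN + 1) * Dm"
definition "m x = 1 - kap * (d x + A * norm x)"
definition "grad_m x = (- kap) *\<^sub>R (grad_d x + (A / norm x) *\<^sub>R x)"
definition "hess_m x = (\<lambda>v. (- kap) *\<^sub>R (hess_d x v + A *\<^sub>R ((1 / norm x) *\<^sub>R v - ((x \<bullet> v) / norm x ^ 3) *\<^sub>R x)))"
definition "delta x = d x * m x"
definition "grad_delta x = m x *\<^sub>R grad_d x + d x *\<^sub>R grad_m x"
definition "hess_delta x = (\<lambda>v. (grad_m x \<bullet> v) *\<^sub>R grad_d x + m x *\<^sub>R hess_d x v + (grad_d x \<bullet> v) *\<^sub>R grad_m x + d x *\<^sub>R hess_m x v)"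
definition "ell x = - ln (norm x)"
definition "beta x = NN / 2 + 1 / (2 * ell x)"
definition "coef x = beta x / (norm x)\<^sup>2"
definition "grad_coef x = (1 / (2 * (ell x)\<^sup>2 * norm x ^ 4) - 2 * beta x / norm x ^ 4) *\<^sub>R x"
definition "F x = (- (1 / delta x)) *\<^sub>R grad_delta x + coef x *\<^sub>R x"
definition "F' x = (\<lambda>v. ((grad_delta x \<bullet> v) / (delta x)\<^sup>2) *\<^sub>R grad_delta x - (1 / delta x) *\<^sub>R hess_delta x v + (grad_coef x \<bullet> v) *\<^sub>R x + coef x *\<^sub>R v)"

lemma d_deriv_within: "(d has_derivative (\<lambda>v. grad_d x \<bullet> v)) (at x within S)"
  using d_deriv has_derivative_at_withinI by blast
lemma grad_d_deriv_within: "(grad_d has_derivative hess_d x) (at x within S)"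
  using grad_d_deriv has_derivative_at_withinI by blast

lemma m_deriv: "x \<noteq> 0 \<Longrightarrow> (m has_derivative (\<lambda>v. grad_m x \<bullet> v)) (at x)"
  unfolding m_def[abs_def]
  by (rule has_derivative_eq_rhs, (rule derivative_intros d_deriv_within norm_has_derivative_nonzero)+)
     (auto simp: fun_eq_iff grad_m_def inner_add_left algebra_simps)

lemma grad_m_deriv: "x \<noteq> 0 \<Longrightarrow> (grad_m has_derivative hess_m x) (at x)"
  unfolding grad_m_def[abs_def]
  by (rule has_derivative_eq_rhs, (rule derivative_intros grad_d_deriv_within norm_has_derivative_nonzero)+)
     (auto simp: fun_eq_iff hess_m_def algebra_simps divide_simps power3_eq_cube)

lemma delta_deriv: "x \<noteq> 0 \<Longrightarrow> (delta has_derivative (\<lambda>v. grad_delta x \<bullet> v)) (at x)"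
  unfolding delta_def[abs_def]
  by (rule has_derivative_eq_rhs, (rule derivative_intros d_deriv_within m_deriv[THEN has_derivative_at_withinI])+)
     (auto simp: fun_eq_iff grad_delta_def inner_add_left algebra_simps)

lemma grad_delta_deriv: "x \<noteq> 0 \<Longrightarrow> (grad_delta has_derivative hess_delta x) (at x)"
  unfolding grad_delta_def[abs_def]
  by (rule has_derivative_eq_rhs, (rule derivative_intros d_deriv_within grad_d_deriv_within m_deriv[THEN has_derivative_at_withinI] grad_m_deriv[THEN has_derivative_at_withinI] | assumption)+)
     (auto simp: fun_eq_iff hess_delta_def algebra_simps)

lemma ell_deriv: "x \<noteq> 0 \<Longrightarrow> (ell has_derivative (\<lambda>v. - (x \<bullet> v) / (norm x)\<^sup>2)) (at x within S)"
  unfolding ell_def[abs_def]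
  by (rule has_derivative_eq_rhs, (rule derivative_intros norm_has_derivative_nonzero | assumption | simp)+)
     (auto simp: fun_eq_iff power2_eq_square divide_inverse)

lemma beta_deriv:
  assumes x: "x \<noteq> 0" and L: "ell x \<noteq> 0"
  shows "(beta has_derivative (\<lambda>v. (x \<bullet> v) / (2 * (ell x)\<^sup>2 * (norm x)\<^sup>2))) (at x within S)"
proof -
  have "((\<lambda>x. NN / 2 + inverse (2 * ell x)) has_derivative
     (\<lambda>v. 0 + - (inverse (2 * ell x) * (2 * (- (x \<bullet> v) / (norm x)\<^sup>2)) * inverse (2 * ell x)))) (at x within S)"
    by (intro derivative_intros ell_deriv x) (use L in simp)
  moreover have "(\<lambda>v. 0 + - (inverse (2 * ell x) * (2 * (- (x \<bullet> v) / (norm x)\<^sup>2)) * inverse (2 * ell x)))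
     = (\<lambda>v. (x \<bullet> v) / (2 * (ell x)\<^sup>2 * (norm x)\<^sup>2))"
    using L by (auto simp: fun_eq_iff field_simps power2_eq_square)
  ultimately show ?thesis unfolding beta_def[abs_def] by (simp add: inverse_eq_divide)
qed

lemma norm_squared_deriv: "((\<lambda>x. (norm x)\<^sup>2) has_derivative (\<lambda>v. 2 * (x \<bullet> v))) (at x within S)"
proof -
  have "((\<lambda>x. x \<bullet> x) has_derivative (\<lambda>v. x \<bullet> v + v \<bullet> x)) (at x within S)"
    by (intro derivative_eq_intros) auto
  then show ?thesis by (simp add: power2_norm_eq_inner inner_commute)
qed

lemma coef_deriv:
  assumes x: "x \<noteq> 0" and L: "ell x \<noteq> 0"
  shows "(coef has_derivative (\<lambda>v. grad_coef x \<bullet> v)) (at x within S)"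
proof -
  have "((\<lambda>x. beta x * inverse ((norm x)\<^sup>2)) has_derivative
     (\<lambda>v. beta x * (- (inverse ((norm x)\<^sup>2) * (2 * (x \<bullet> v)) * inverse ((norm x)\<^sup>2)))
          + (x \<bullet> v) / (2 * (ell x)\<^sup>2 * (norm x)\<^sup>2) * inverse ((norm x)\<^sup>2))) (at x within S)"
    by (intro derivative_intros beta_deriv norm_squared_deriv x L) (use x in simp)
  moreover have "(\<lambda>v. beta x * (- (inverse ((norm x)\<^sup>2) * (2 * (x \<bullet> v)) * inverse ((norm x)\<^sup>2)))
          + (x \<bullet> v) / (2 * (ell x)\<^sup>2 * (norm x)\<^sup>2) * inverse ((norm x)\<^sup>2)) = (\<lambda>v. grad_coef x \<bullet> v)"
    using x L by (auto simp: fun_eq_iff grad_coef_def field_simps power2_eq_square power4_eq_xxxx)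
  ultimately show ?thesis unfolding coef_def[abs_def] by (simp add: inverse_eq_divide)
qed

lemma F_deriv:
  assumes x: "x \<noteq> 0" and L: "ell x \<noteq> 0" and D: "delta x \<noteq> 0"
  shows "(F has_derivative F' x) (at x)"
proof -
  have "((\<lambda>x. (- inverse (delta x)) *\<^sub>R grad_delta x + coef x *\<^sub>R x) has_derivative
    (\<lambda>v. (- inverse (delta x)) *\<^sub>R hess_delta x v + (- (- (inverse (delta x) * (grad_delta x \<bullet> v) * inverse (delta x)))) *\<^sub>R grad_delta x
         + (coef x *\<^sub>R v + (grad_coef x \<bullet> v) *\<^sub>R x))) (at x)"
    by (intro derivative_intros delta_deriv[THEN has_derivative_at_withinI] grad_delta_deriv[THEN has_derivative_at_withinI] coef_deriv x L D)
  moreover have "(\<lambda>v. (- inverse (delta x)) *\<^sub>R hess_delta x v + (- (- (inverse (delta x) * (grad_delta x \<bullet> v) * inverse (delta x)))) *\<^sub>R grad_delta x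
         + (coef x *\<^sub>R v + (grad_coef x \<bullet> v) *\<^sub>R x)) = F' x"
    unfolding F'_def by (auto simp: fun_eq_iff power2_eq_square divide_inverse algebra_simps)
  ultimately show ?thesis unfolding F_def[abs_def] by (simp add: inverse_eq_divide)
qed

lemma trace_hess_m: "trace_map (hess_m x) = - kap * (lap_d x + A * (NN / norm x - (x \<bullet> x) / norm x ^ 3))"
  unfolding hess_m_def by (simp add: trace_map_minus trace_map_scale trace_map_add trace_map_diff trace_map_rank1_div trace_map_id lap_d_def NN_def)

lemma trace_hess_delta: "trace_map (hess_delta x) = grad_m x \<bullet> grad_d x + m x * lap_d x + grad_d x \<bullet> grad_m x + d x * trace_map (hess_m x)"
  unfolding hess_delta_def by (simp add: trace_map_scale trace_map_add trace_map_rank1 lap_d_def)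

lemma trace_F': "trace_map (F' x) = (grad_delta x \<bullet> grad_delta x) / (delta x)\<^sup>2 - (1 / delta x) * trace_map (hess_delta x) + grad_coef x \<bullet> x + coef x * NN"
  unfolding F'_def by (simp add: trace_map_scale trace_map_add trace_map_diff trace_map_rank1 trace_map_rank1_div trace_map_id NN_def DIM_cart)

lemma norm_F_squared: "(norm (F x))\<^sup>2 = (grad_delta x \<bullet> grad_delta x) / (delta x)\<^sup>2 - 2 * coef x * (grad_delta x \<bullet> x) / delta x + (coef x)\<^sup>2 * (x \<bullet> x)"
  unfolding F_def power2_norm_eq_inner
  by (simp add: inner_add_left inner_add_right inner_commute power2_eq_square divide_inverse algebra_simps)

lemma defect_formula:
  assumes x: "x \<noteq> 0" and L: "ell x \<noteq> 0" and D: "delta x \<noteq> 0"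
  shows "trace_map (F' x) - (norm (F x))\<^sup>2 = (- trace_map (hess_delta x) + 2 * coef x * (grad_delta x \<bullet> x - delta x)) / delta x
          + (NN\<^sup>2 / 4 + 1 / (4 * (ell x)\<^sup>2)) / (norm x)\<^sup>2"
proof -
  have xx: "x \<bullet> x = (norm x)\<^sup>2" by (simp add: power2_norm_eq_inner)
  have n: "norm x \<noteq> 0" using x by simp
  have gbx: "grad_coef x \<bullet> x = (1 / (2 * (ell x)\<^sup>2 * norm x ^ 4) - 2 * beta x / norm x ^ 4) * (norm x)\<^sup>2"
    unfolding grad_coef_def by (simp add: xx)
  show ?thesis
    unfolding trace_F' norm_F_squared xx gbx coef_def
    using defect_identity[OF n L D, of "grad_delta x \<bullet> grad_delta x" "trace_map (hess_delta x)" NN "grad_delta x \<bullet> x"]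
    by (simp add: beta_def)
qed

lemma F'_continuous_on:
  assumes U: "\<And>x. x \<in> U \<Longrightarrow> x \<noteq> 0 \<and> delta x \<noteq> 0 \<and> ell x \<noteq> 0"
  shows "continuous_on U (\<lambda>x. F' x v)"
proof -
  have n0: "\<And>x. x \<in> U \<Longrightarrow> norm x \<noteq> 0" "\<And>x. x \<in> U \<Longrightarrow> norm x > 0" using U by auto
  have cm: "continuous_on U m" unfolding m_def[abs_def] by (intro continuous_intros d_cont)
  have cgm: "continuous_on U grad_m" unfolding grad_m_def[abs_def] by (intro continuous_intros grad_d_cont) (use n0 in auto)
  have cHm: "continuous_on U (\<lambda>x. hess_m x w)" for w
    unfolding hess_m_def by (intro continuous_intros hess_d_cont) (use n0 in auto)
  have cdel: "continuous_on U delta" unfolding delta_def[abs_def] by (intro continuous_intros d_cont cm)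
  have cgdel: "continuous_on U grad_delta" unfolding grad_delta_def[abs_def] by (intro continuous_intros d_cont cm grad_d_cont cgm)
  have cHdel: "continuous_on U (\<lambda>x. hess_delta x w)" for w
    unfolding hess_delta_def by (intro continuous_intros d_cont cm grad_d_cont cgm cHm hess_d_cont)
  have cLg: "continuous_on U ell" unfolding ell_def[abs_def] by (intro continuous_intros) (use n0 in auto)
  have cbet: "continuous_on U beta" unfolding beta_def[abs_def] by (intro continuous_intros cLg) (use U in auto)
  have cbb: "continuous_on U coef" unfolding coef_def[abs_def] by (intro continuous_intros cbet) (use n0 in auto)
  have cgb: "continuous_on U grad_coef" unfolding grad_coef_def[abs_def] by (intro continuous_intros cLg cbet) (use n0 U in auto)
  show ?thesis unfolding F'_def
    by (intro continuous_intros cgdel cdel cHdel cgb cbb) (use U in auto)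
qed

lemma defect_lower_bound_at:
  fixes x :: "real^'n"
  assumes r: "x \<noteq> 0" and L: "ell x \<ge> 2" and N: "NN \<ge> 2"
    and dv: "d x > 0" and lp: "\<bar>lap_d x\<bar> \<le> M1" and DDm: "norm (grad_d x) \<le> Dm"
    and E: "\<bar>grad_d x \<bullet> x - d x\<bar> \<le> C0 * (norm x)\<^sup>2" and C0: "C0 \<ge> 0"
    and S1: "2 * A * C0 * norm x + (Dm * norm x + C0 * (norm x)\<^sup>2) * M1 \<le> 1"
    and S2: "kap * (Dm * norm x + C0 * (norm x)\<^sup>2 + A * norm x) < 1"
  shows "delta x > 0" and "hardy_weight NN x \<le> trace_map (F' x) - (norm (F x))\<^sup>2"
proof -
  have rpos: "norm x > 0" using r by simp
  have cauchy_schwarz: "\<bar>grad_d x \<bullet> x\<bar> \<le> norm (grad_d x) * norm x" by (rule Cauchy_Schwarz_ineq2)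
  note scalar = error_term_nonneg[OF rpos L N dv lp grad_d_norm DDm cauchy_schwarz E C0 kap_def A_def S1 S2]
  have m_eq: "m x = 1 - kap * (d x + A * norm x)" by (simp add: m_def)
  have mpos: "m x > 0" using scalar(1) m_eq by simp
  show dpos: "delta x > 0" unfolding delta_def using dv mpos by simp
  have xx: "x \<bullet> x = (norm x)\<^sup>2" by (simp add: power2_norm_eq_inner)
  have grad_m_grad_d: "grad_m x \<bullet> grad_d x = - kap * ((norm (grad_d x))\<^sup>2 + (A / norm x) * (grad_d x \<bullet> x))"
    unfolding grad_m_def by (simp add: inner_add_left inner_add_right power2_norm_eq_inner inner_commute)
  have grad_d_grad_m: "grad_d x \<bullet> grad_m x = grad_m x \<bullet> grad_d x" by (simp add: inner_commute)
  have grad_m_radial: "grad_m x \<bullet> x = - kap * (grad_d x \<bullet> x + (A / norm x) * (norm x)\<^sup>2)"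
    unfolding grad_m_def by (simp add: inner_add_left xx)
  have trace_hess: "trace_map (hess_delta x) = 2 * (- kap * ((norm (grad_d x))\<^sup>2 + (A / norm x) * (grad_d x \<bullet> x))) + m x * lap_d x
       + d x * (- kap * (lap_d x + A * (NN / norm x - (norm x)\<^sup>2 / norm x ^ 3)))"
    unfolding trace_hess_delta trace_hess_m grad_d_grad_m grad_m_grad_d xx by simp
  have radial_part: "grad_delta x \<bullet> x - delta x = m x * (grad_d x \<bullet> x) - kap * d x * (grad_d x \<bullet> x + (A / norm x) * (norm x)\<^sup>2) - d x * m x"
    unfolding grad_delta_def delta_def by (simp add: inner_add_left grad_m_radial)
  have error_nonneg: "0 \<le> - trace_map (hess_delta x) + 2 * coef x * (grad_delta x \<bullet> x - delta x)"
    using scalar(2) unfolding trace_hess radial_part coef_def m_eq[symmetric] by (simp add: beta_def mult.assoc)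
  have L0: "ell x \<noteq> 0" using L by simp
  have "trace_map (F' x) - (norm (F x))\<^sup>2 = (- trace_map (hess_delta x) + 2 * coef x * (grad_delta x \<bullet> x - delta x)) / delta x
          + (NN\<^sup>2 / 4 + 1 / (4 * (ell x)\<^sup>2)) / (norm x)\<^sup>2"
    by (rule defect_formula[OF r L0]) (use dpos in simp)
  also have "\<dots> \<ge> (NN\<^sup>2 / 4 + 1 / (4 * (ell x)\<^sup>2)) / (norm x)\<^sup>2"
    using error_nonneg dpos by simp
  finally show "hardy_weight NN x \<le> trace_map (F' x) - (norm (F x))\<^sup>2"
    by (simp add: hardy_weight_def ell_def add_divide_distrib power2_eq_square mult.commute mult.left_commute)
qed

text \<open>Critical radius below which the smallness conditions hold and \<open>-ln |x| \<ge> 2\<close>.\<close>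
definition "r_crit = min (exp (-2))
   (min (1 / (2 * A * C0 + (Dm + C0) * M1 + 1)) (1 / (kap * (Dm + C0 + A) + 1)))"

lemma r_crit_factors_nonneg:
  assumes "admissible C0 M1 Dm"
  shows "kap \<ge> 1" "A \<ge> 0" "0 \<le> 2 * A * C0 + (Dm + C0) * M1" "0 \<le> kap * (Dm + C0 + A)"
proof -
  note s = admissible_signs[OF assms]
  have "NN \<ge> 0" by (simp add: NN_def)
  then show \<kappa>: "kap \<ge> 1" and A0: "A \<ge> 0" using s unfolding kap_def A_def by simp_all
  show "0 \<le> 2 * A * C0 + (Dm + C0) * M1" "0 \<le> kap * (Dm + C0 + A)"
    using s \<kappa> A0 by (auto intro!: add_nonneg_nonneg mult_nonneg_nonneg)
qed

lemma r_crit_pos: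
  assumes "admissible C0 M1 Dm"
  shows "r_crit > 0"
  using r_crit_factors_nonneg[OF assms] unfolding r_crit_def by simp

lemma r_crit_lt_1: "r_crit < 1"
  using exp_less_one_iff[of "-2::real"] unfolding r_crit_def by linarith

lemma small_radius_conditions:
  assumes adm: "admissible C0 M1 Dm" and x0: "x \<noteq> 0" and xr: "norm x < r_crit"
  shows "ell x \<ge> 2"
    and "2 * A * C0 * norm x + (Dm * norm x + C0 * (norm x)\<^sup>2) * M1 \<le> 1"
    and "kap * (Dm * norm x + C0 * (norm x)\<^sup>2 + A * norm x) < 1"
proof -
  note s = admissible_signs[OF adm] and Z = r_crit_factors_nonneg[OF adm]
  have npos: "norm x > 0" using x0 by simp
  have "norm x < exp (-2)" using xr unfolding r_crit_def by linarith
  then have "ln (norm x) < -2" using npos by (metis ln_exp ln_less_cancel_iff exp_gt_zero)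
  then show "ell x \<ge> 2" unfolding ell_def by simp
  have "norm x < 1" using xr r_crit_lt_1 by linarith
  then have sq: "C0 * (norm x)\<^sup>2 \<le> C0 * norm x"
    using npos s(1) by (intro mult_left_mono) (simp_all add: power2_eq_square)
  have "norm x < 1 / (2 * A * C0 + (Dm + C0) * M1 + 1)" "norm x < 1 / (kap * (Dm + C0 + A) + 1)"
    using xr unfolding r_crit_def by linarith+
  then have Z1: "norm x * (2 * A * C0 + (Dm + C0) * M1 + 1) < 1"
    and Z2: "norm x * (kap * (Dm + C0 + A) + 1) < 1"
    using Z by (simp_all add: less_divide_eq)
  have "2 * A * C0 * norm x + (Dm * norm x + C0 * (norm x)\<^sup>2) * M1
      \<le> norm x * (2 * A * C0 + (Dm + C0) * M1)"
    using mult_right_mono[OF sq s(2)] by (simp add: algebra_simps)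
  also have "\<dots> \<le> norm x * (2 * A * C0 + (Dm + C0) * M1 + 1)" using npos by simp
  finally show "2 * A * C0 * norm x + (Dm * norm x + C0 * (norm x)\<^sup>2) * M1 \<le> 1" using Z1 by linarith
  have "kap * (Dm * norm x + C0 * (norm x)\<^sup>2 + A * norm x) \<le> norm x * (kap * (Dm + C0 + A))"
    using mult_left_mono[OF sq, of kap] Z(1) by (simp add: algebra_simps)
  also have "\<dots> \<le> norm x * (kap * (Dm + C0 + A) + 1)" using npos by simp
  finally show "kap * (Dm * norm x + C0 * (norm x)\<^sup>2 + A * norm x) < 1" using Z2 by linarith
qed

lemma defect_bound_below_r_crit:
  assumes N: "CARD('n) \<ge> 2" and adm: "admissible C0 M1 Dm"
    and x0: "x \<noteq> 0" and xr: "norm x < r_crit" and dx: "d x > 0"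
  shows "delta x > 0" "ell x \<ge> 2" "hardy_weight NN x \<le> trace_map (F' x) - (norm (F x))\<^sup>2"
proof -
  have x1: "norm x \<le> 1" using xr r_crit_lt_1 by linarith
  have NN: "NN \<ge> 2" using N by (simp add: NN_def)
  note small = small_radius_conditions[OF adm x0 xr]
  have bounds: "\<bar>lap_d x\<bar> \<le> M1" "norm (grad_d x) \<le> Dm"
      "\<bar>grad_d x \<bullet> x - d x\<bar> \<le> C0 * (norm x)\<^sup>2" "C0 \<ge> 0"
    using adm x1 unfolding admissible_def by auto
  show "ell x \<ge> 2" by (rule small(1))
  show "delta x > 0" "hardy_weight NN x \<le> trace_map (F' x) - (norm (F x))\<^sup>2"
    using defect_lower_bound_at[OF x0 small(1) NN dx bounds small(2,3)] by blast+
qed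

lemma hardy_below_r_crit:
  assumes N: "CARD('n) \<ge> 2" and adm: "admissible C0 M1 Dm" and U: "open U"
    and inside: "\<And>x. x \<in> U \<Longrightarrow> x \<noteq> 0 \<and> norm x < r_crit \<and> d x > 0"
    and H: "H10 U u G"
  shows "(\<integral>\<^sup>+x\<in>U. ennreal (hardy_weight NN x * (u x)\<^sup>2) \<partial>lborel)
           \<le> (\<integral>\<^sup>+x\<in>U. ennreal ((norm (G x))\<^sup>2) \<partial>lborel)"
proof (rule vector_field_hardy[OF U _ _ hardy_weight_measurable hardy_weight_nonneg _ H])
  fix x assume "x \<in> U"
  with inside have x: "x \<noteq> 0" "norm x < r_crit" "d x > 0" by auto
  note b = defect_bound_below_r_crit[OF N adm x]
  show "(F has_derivative F' x) (at x)" using b x by (intro F_deriv) auto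
  show "hardy_weight NN x \<le> trace_map (F' x) - (norm (F x))\<^sup>2" by (rule b(3))
next
  fix v
  show "continuous_on U (\<lambda>x. F' x v)"
  proof (rule F'_continuous_on)
    fix x assume "x \<in> U"
    with inside have x: "x \<noteq> 0" "norm x < r_crit" "d x > 0" by auto
    from defect_bound_below_r_crit[OF N adm x] show "x \<noteq> 0 \<and> delta x \<noteq> 0 \<and> ell x \<noteq> 0"
      using x by auto
  qed
qed

lemma hardy_near_boundary_point:
  fixes \<Omega> :: "(real^'n) set"
  assumes N: "CARD('n) \<ge> 2" and adm: "admissible C0 M1 Dm" and op: "open \<Omega>" and n0: "0 \<notin> \<Omega>"
    and rep: "\<Omega> \<inter> ball 0 \<rho> = {x \<in> ball 0 \<rho>. x \<bullet> nu < h (hyp_proj nu x)}"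
    and r: "r \<le> \<rho>" "r \<le> r_crit" and H: "H10 (\<Omega> \<inter> ball 0 r) u G"
  shows "(\<integral>\<^sup>+x\<in>\<Omega> \<inter> ball 0 r. ennreal ((norm (G x))\<^sup>2) \<partial>lborel)
        \<ge> ennreal ((real (CARD('n)))\<^sup>2 / 4) *
             (\<integral>\<^sup>+x\<in>\<Omega> \<inter> ball 0 r. ennreal ((u x)\<^sup>2 / (norm x)\<^sup>2) \<partial>lborel)
          + ennreal (1/4) *
             (\<integral>\<^sup>+x\<in>\<Omega> \<inter> ball 0 r. ennreal ((u x)\<^sup>2 / ((norm x)\<^sup>2 * (ln (norm x))\<^sup>2)) \<partial>lborel)"
proof -
  have inside: "x \<noteq> 0 \<and> norm x < r_crit \<and> d x > 0" if x: "x \<in> \<Omega> \<inter> ball 0 r" for x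
  proof -
    have "x \<in> \<Omega> \<inter> ball 0 \<rho>" "norm x < r_crit" using x r by auto
    then have "x \<bullet> nu < h (hyp_proj nu x)" "norm x < r_crit" using rep by blast+
    moreover have "x \<noteq> 0" using x n0 by blast
    ultimately show ?thesis by (simp add: d_def)
  qed
  have u: "u \<in> borel_measurable lborel" using H by (simp add: H10_def)
  have "open (\<Omega> \<inter> ball 0 r)" "\<Omega> \<inter> ball 0 r \<in> sets lborel" using op by auto
  from hardy_weight_integral_split[OF u this(2), of NN] hardy_below_r_crit[OF N adm this(1) inside H]
  show ?thesis by (simp add: NN_def)
qed

end

lemma graph_through_boundary_point:
  fixes \<Omega> :: "(real^'n) set" and nu :: "real^'n" and h :: "real^'n \<Rightarrow> real"
  assumes op: "open \<Omega>" and fr: "0 \<in> frontier \<Omega>" and \<rho>: "\<rho> > 0"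
    and rep: "\<Omega> \<inter> ball 0 \<rho> = {x \<in> ball 0 \<rho>. x \<bullet> nu < h (hyp_proj nu x)}"
    and hc: "continuous_on UNIV h"
  shows "h 0 = 0" and "0 \<notin> \<Omega>"
proof -
  have P0: "hyp_proj nu 0 = 0" by (simp add: hyp_proj_def)
  show n0: "0 \<notin> \<Omega>" using fr op by (simp add: frontier_def interior_open)
  have "\<not> h 0 > 0"
  proof
    assume "h 0 > 0"
    then have "0 \<in> {x \<in> ball 0 \<rho>. x \<bullet> nu < h (hyp_proj nu x)}" using \<rho> P0 by simp
    then show False using n0 rep by blast
  qed
  moreover have "h 0 \<ge> 0"
  proof -
    define S where "S = {x. 0 \<le> h (hyp_proj nu x) - x \<bullet> nu}"
    have "continuous_on UNIV (\<lambda>x. h (hyp_proj nu x) - x \<bullet> nu)"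
      by (intro continuous_intros hyp_proj_continuous_on continuous_on_compose2[OF hc]) auto
    then have "closed S" unfolding S_def by (rule closed_Collect_le[OF continuous_on_const])
    moreover have "ball 0 \<rho> \<inter> \<Omega> \<subseteq> {x. x \<bullet> nu < h (hyp_proj nu x)}" using rep by blast
    then have "ball 0 \<rho> \<inter> \<Omega> \<subseteq> S" unfolding S_def by auto
    ultimately have "closure (ball 0 \<rho> \<inter> \<Omega>) \<subseteq> S" by (rule closure_minimal[rotated])
    moreover have "0 \<in> ball 0 \<rho> \<inter> closure \<Omega>" using fr \<rho> by (simp add: frontier_def)
    ultimately have "0 \<in> S" using open_Int_closure_subset[OF open_ball, of 0 \<rho> \<Omega>] by blast
    then show ?thesis using P0 by (simp add: S_def)
  qed
  ultimately show "h 0 = 0" by linarith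
qed

theorem corollary3p2:
  fixes \<Omega> :: "(real^'n) set"
  assumes "CARD('n) \<ge> 2"
    and "lipschitz_domain \<Omega>"
    and "0 \<in> frontier \<Omega>"
    and "C2_boundary_near \<Omega> 0"
  shows "\<exists>c > 0. \<exists>r0 > 0. r0 < 1 \<and> (\<forall>r. 0 < r \<and> r < r0 \<longrightarrow>
           (\<forall>u G. H10 (\<Omega> \<inter> ball 0 r) u G \<longrightarrow>
              (\<integral>\<^sup>+x\<in>\<Omega> \<inter> ball 0 r. ennreal ((norm (G x))\<^sup>2) \<partial>lborel)
              \<ge> ennreal ((real (CARD('n)))\<^sup>2 / 4) *
                   (\<integral>\<^sup>+x\<in>\<Omega> \<inter> ball 0 r. ennreal ((u x)\<^sup>2 / (norm x)\<^sup>2) \<partial>lborel)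
                + ennreal c *
                   (\<integral>\<^sup>+x\<in>\<Omega> \<inter> ball 0 r. ennreal ((u x)\<^sup>2 / ((norm x)\<^sup>2 * (ln (norm x))\<^sup>2)) \<partial>lborel)))"
proof -
  have op: "open \<Omega>" using assms(2) by (simp add: lipschitz_domain_def)
  obtain \<rho> nu h g H where \<rho>: "\<rho> > 0" and nu1: "norm nu = 1"
    and rep: "\<Omega> \<inter> ball 0 \<rho> = {x \<in> ball 0 \<rho>. x \<bullet> nu < h (hyp_proj nu x)}"
    and hd: "\<And>y. (h has_derivative (\<lambda>v. g y \<bullet> v)) (at y)"
    and gd: "\<And>y. (g has_derivative H y) (at y)" and Hc: "\<And>v. continuous_on UNIV (\<lambda>y. H y v)"
    using assms(4) unfolding C2_boundary_near_def C2_fun_def by blast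
  have "continuous_on UNIV h"
    using hd by (meson continuous_at_imp_continuous_on has_derivative_continuous)
  note graph = graph_through_boundary_point[OF op assms(3) \<rho> rep this]
  interpret C2_graph nu h g H using nu1 hd gd Hc graph(1) by unfold_locales
  obtain C0 M1 Dm where adm: "admissible C0 M1 Dm" using admissible_exists by blast
  interpret hardy_field nu h g H C0 M1 Dm by unfold_locales
  define r0 where "r0 = min \<rho> r_crit"
  have r0: "r0 > 0" "r0 < 1" using \<rho> r_crit_pos[OF adm] r_crit_lt_1 unfolding r0_def by auto
  note main = hardy_near_boundary_point[OF assms(1) adm op graph(2) rep]
  show ?thesis
    by (rule exI[of _ "1/4"], simp, rule exI[of _ r0]) (use r0 main in \<open>auto simp: r0_def\<close>)
qed

end
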